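(* Let $P,Q$ be terms of $\mathcal{L}$ whose free process variables are among $X_1,\dots,X_n$, and let $h$ be a name not occurring in $P,Q$. Then $P\{\tilde R/\tilde X\}\sim_{\mathrm{HO}}Q\{\tilde R/\tilde X\}$ for every tuple $\tilde R=R_1,\dots,R_n$ of closed terms if and only if $h(X_1).\cdots.h(X_n).P\sim_{\mathrm{HO}}h(X_1).\cdots.h(X_n).Q$.
   Context: Calculus $\mathcal{L}$: names are constants ($a,b,c,d$) or name variables ($x,y,z$), $m,n$ range over names; process variables $X,Y,Z$. Terms: $P,Q::=0\mid X\mid m(X).P\mid \overline{m}(Q)\mid P|Q\mid \langle X\rangle P\mid P\langle Q\rangle\mid\langle x\rangle P\mid P\langle n\rangle$; $m(X).P$, $\langle X\rangle P$ bind $X$, $\langle x\rangle P$ binds $x$; up to $\alpha$-conversion, well-typed, applications terminating. Closed = no free process variables. $\{\tilde R/\tilde X\}$ is pairwise substitution. Structural congruence $\equiv$: smallest congruence with associativity and commutativity of $|$, $P|0\equiv P$, $(\langle X\rangle P)\langle Q\rangle\equiv P\{Q/X\}$, $(\langle x\rangle P)\langle m\rangle\equiv P\{m/x\}$. Transitions: $m(X).P\xrightarrow{m(X)}P$; $\overline{m}Q\xrightarrow{\overline{m}Q}0$; $P\xrightarrow{\lambda}P'$ implies $P|Q\xrightarrow{\lambda}P'|Q$; $P\xrightarrow{\overline{m}A}P'$, $Q\xrightarrow{m(X)}Q'$ imply $P|Q\xrightarrow{\tau}P'|Q'\{A/X\}$; symmetric versions; closure under $\equiv$. Strong HO bisimulation: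 symmetric relation $\mathcal{R}$ on closed terms such that $P\,\mathcal{R}\,Q$ implies: (1) if $P$ is a non-abstraction (not of form $\langle Y\rangle A$ or $\langle y\rangle A$) so is $Q$; (2) if $P=\langle Y\rangle P'$ then $Q=\langle Y\rangle Q'$ and $P'\{A/Y\}\,\mathcal{R}\,Q'\{A/Y\}$ for every closed $A$; (3) if $P=\langle y\rangle A$ then $Q=\langle y\rangle B$ and $A\,\mathcal{R}\,B$; (4) if $P\xrightarrow{\overline{a}A}P'$ then $Q\xrightarrow{\overline{a}B}Q'$ with $A\,\mathcal{R}\,B$ and $P'\,\mathcal{R}\,Q'$; (5) if $P\xrightarrow{a(X)}P'$ then $Q\xrightarrow{a(X)}Q'$ and $P'\{A/X\}\,\mathcal{R}\,Q'\{A/X\}$ for every closed $A$; (6) if $P\xrightarrow{\tau}P'$ then $Q\xrightarrow{\tau}Q'$ with $P'\,\mathcal{R}\,Q'$. $\sim_{\mathrm{HO}}$ is the largest strong HO bisimulation. *)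

theory Defs
  imports Main
begin

section \<open>Syntax of the calculus L (de Bruijn representation, i.e. terms up to alpha)\<close>

text \<open>Names: constants a,b,c,... (NC k) and name variables (NV i, de Bruijn index,
  bound by name abstractions).  Process variables are de Bruijn indices (PVar i),
  bound by input prefixes and process abstractions.\<close>

datatype nm = NC nat | NV nat

text \<open>Simple types: processes, process abstractions, name abstractions.\<close>
datatype ty = Pr | FunP ty ty | FunN ty

datatype trm =
    PNil
  | PVar nat
  | Inp nm ty trm        (* m(X:T).P, binds process variable 0 *)
  | Out nm trm
  | Par trm trm
  | AbsP ty trm          (* <X:T>P, binds process variable 0 *)
  | AppP trm trm
  | AbsN trm             (* <x>P, binds name variable 0 *)
  | AppN trm nm

fun nmshift :: "nm \<Rightarrow> nm" where
  "nmshift (NC c) = NC c"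
| "nmshift (NV i) = NV (Suc i)"

fun nmap :: "(nat \<Rightarrow> nm) \<Rightarrow> nm \<Rightarrow> nm" where
  "nmap s (NC c) = NC c"
| "nmap s (NV i) = s i"

definition upn :: "(nat \<Rightarrow> nm) \<Rightarrow> nat \<Rightarrow> nm" where
  "upn s = (\<lambda>i. case i of 0 \<Rightarrow> NV 0 | Suc j \<Rightarrow> nmshift (s j))"

primrec nsubst :: "(nat \<Rightarrow> nm) \<Rightarrow> trm \<Rightarrow> trm" where
  "nsubst s PNil = PNil"
| "nsubst s (PVar i) = PVar i"
| "nsubst s (Inp m T P) = Inp (nmap s m) T (nsubst s P)"
| "nsubst s (Out m Q) = Out (nmap s m) (nsubst s Q)"
| "nsubst s (Par P Q) = Par (nsubst s P) (nsubst s Q)"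
| "nsubst s (AbsP T P) = AbsP T (nsubst s P)"
| "nsubst s (AppP P Q) = AppP (nsubst s P) (nsubst s Q)"
| "nsubst s (AbsN P) = AbsN (nsubst (upn s) P)"
| "nsubst s (AppN P m) = AppN (nsubst s P) (nmap s m)"

definition upr :: "(nat \<Rightarrow> nat) \<Rightarrow> nat \<Rightarrow> nat" where
  "upr f = (\<lambda>i. case i of 0 \<Rightarrow> 0 | Suc j \<Rightarrow> Suc (f j))"

primrec renP :: "(nat \<Rightarrow> nat) \<Rightarrow> trm \<Rightarrow> trm" where
  "renP f PNil = PNil"
| "renP f (PVar i) = PVar (f i)"
| "renP f (Inp m T P) = Inp m T (renP (upr f) P)"
| "renP f (Out m Q) = Out m (renP f Q)"
| "renP f (Par P Q) = Par (renP f P) (renP f Q)"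
| "renP f (AbsP T P) = AbsP T (renP (upr f) P)"
| "renP f (AppP P Q) = AppP (renP f P) (renP f Q)"
| "renP f (AbsN P) = AbsN (renP f P)"
| "renP f (AppN P m) = AppN (renP f P) m"

definition upp :: "(nat \<Rightarrow> trm) \<Rightarrow> nat \<Rightarrow> trm" where
  "upp s = (\<lambda>i. case i of 0 \<Rightarrow> PVar 0 | Suc j \<Rightarrow> renP Suc (s j))"

primrec psubst :: "(nat \<Rightarrow> trm) \<Rightarrow> trm \<Rightarrow> trm" where
  "psubst s PNil = PNil"
| "psubst s (PVar i) = s i"
| "psubst s (Inp m T P) = Inp m T (psubst (upp s) P)"
| "psubst s (Out m Q) = Out m (psubst s Q)"
| "psubst s (Par P Q) = Par (psubst s P) (psubst s Q)"
| "psubst s (AbsP T P) = AbsP T (psubst (upp s) P)"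
| "psubst s (AppP P Q) = AppP (psubst s P) (psubst s Q)"
| "psubst s (AbsN P) = AbsN (psubst (\<lambda>i. nsubst (\<lambda>j. NV (Suc j)) (s i)) P)"
| "psubst s (AppN P m) = AppN (psubst s P) m"

text \<open>P{A/X} where X is the process variable bound by the outermost binder (index 0).\<close>
definition inst :: "trm \<Rightarrow> nat \<Rightarrow> trm" where
  "inst A = (\<lambda>i. case i of 0 \<Rightarrow> A | Suc j \<Rightarrow> PVar j)"

text \<open>P{m/x} where x is the name variable bound by the outermost binder (index 0).\<close>
definition ninst :: "nm \<Rightarrow> nat \<Rightarrow> nm" where
  "ninst m = (\<lambda>i. case i of 0 \<Rightarrow> m | Suc j \<Rightarrow> NV j)"

text \<open>Pairwise substitution P{R_1..R_n / X_1..X_n}: the list entry Rs!i replaces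
  the process variable with de Bruijn index i.\<close>
definition ssubst :: "trm list \<Rightarrow> trm \<Rightarrow> trm" where
  "ssubst Rs P = psubst (\<lambda>i. if i < length Rs then Rs ! i else PVar (i - length Rs)) P"

primrec names :: "trm \<Rightarrow> nm set" where
  "names PNil = {}"
| "names (PVar i) = {}"
| "names (Inp m T P) = insert m (names P)"
| "names (Out m Q) = insert m (names Q)"
| "names (Par P Q) = names P \<union> names Q"
| "names (AbsP T P) = names P"
| "names (AppP P Q) = names P \<union> names Q"
| "names (AbsN P) = names P"
| "names (AppN P m) = insert m (names P)"

section \<open>Typing (well-typedness; guarantees applications terminate)\<close>

text \<open>typing G P T: P has type T when free process variable i has type G!i.
  In particular typing [] P T implies that P is closed.\<close>
inductive typing :: "ty list \<Rightarrow> trm \<Rightarrow> ty \<Rightarrow> bool" where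
  t_nil: "typing G PNil Pr"
| t_var: "i < length G \<Longrightarrow> typing G (PVar i) (G ! i)"
| t_inp: "typing (T # G) P Pr \<Longrightarrow> typing G (Inp m T P) Pr"
| t_out: "typing G Q T \<Longrightarrow> typing G (Out m Q) Pr"
| t_par: "typing G P Pr \<Longrightarrow> typing G Q Pr \<Longrightarrow> typing G (Par P Q) Pr"
| t_absP: "typing (T # G) P U \<Longrightarrow> typing G (AbsP T P) (FunP T U)"
| t_appP: "typing G P (FunP T U) \<Longrightarrow> typing G Q T \<Longrightarrow> typing G (AppP P Q) U"
| t_absN: "typing G P U \<Longrightarrow> typing G (AbsN P) (FunN U)"
| t_appN: "typing G P (FunN U) \<Longrightarrow> typing G (AppN P m) U"

definition closedT :: "trm \<Rightarrow> bool" where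
  "closedT P \<longleftrightarrow> (\<exists>T. typing [] P T)"

inductive scong :: "trm \<Rightarrow> trm \<Rightarrow> bool" where
  sc_refl: "scong P P"
| sc_sym: "scong P Q \<Longrightarrow> scong Q P"
| sc_trans: "scong P Q \<Longrightarrow> scong Q R \<Longrightarrow> scong P R"
| sc_inp: "scong P P' \<Longrightarrow> scong (Inp m T P) (Inp m T P')"
| sc_out: "scong P P' \<Longrightarrow> scong (Out m P) (Out m P')"
| sc_par: "scong P P' \<Longrightarrow> scong Q Q' \<Longrightarrow> scong (Par P Q) (Par P' Q')"
| sc_absP: "scong P P' \<Longrightarrow> scong (AbsP T P) (AbsP T P')"
| sc_appP: "scong P P' \<Longrightarrow> scong Q Q' \<Longrightarrow> scong (AppP P Q) (AppP P' Q')"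
| sc_absN: "scong P P' \<Longrightarrow> scong (AbsN P) (AbsN P')"
| sc_appN: "scong P P' \<Longrightarrow> scong (AppN P m) (AppN P' m)"
| sc_assoc: "scong (Par (Par P Q) R) (Par P (Par Q R))"
| sc_comm: "scong (Par P Q) (Par Q P)"
| sc_nil: "scong (Par P PNil) P"
| sc_betaP: "scong (AppP (AbsP T P) Q) (psubst (inst Q) P)"
| sc_betaN: "scong (AppN (AbsN P) m) (nsubst (ninst m) P)"

text \<open>LInp m T is the input label m(X) (X of type T); the residual has the received
  variable X free as process variable 0.  LOut m A is \<overline>m A.\<close>
datatype lab = LOut nm trm | LInp nm ty | LTau

fun labctx :: "lab \<Rightarrow> ty list" where
  "labctx (LInp m T) = [T]"
| "labctx _ = []"

text \<open>The inactive partner of a parallel composition, adjusted to the residual's scope.\<close>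
fun lift_lab :: "lab \<Rightarrow> trm \<Rightarrow> trm" where
  "lift_lab (LInp m T) Q = renP Suc Q"
| "lift_lab _ Q = Q"

inductive trans :: "trm \<Rightarrow> lab \<Rightarrow> trm \<Rightarrow> bool" where
  tr_inp: "trans (Inp m T P) (LInp m T) P"
| tr_out: "trans (Out m Q) (LOut m Q) PNil"
| tr_parL: "trans P l P' \<Longrightarrow> trans (Par P Q) l (Par P' (lift_lab l Q))"
| tr_parR: "trans P l P' \<Longrightarrow> trans (Par Q P) l (Par (lift_lab l Q) P')"
| tr_commL: "trans P (LOut m A) P' \<Longrightarrow> trans Q (LInp m T) Q' \<Longrightarrow> typing [] A T \<Longrightarrow>
             trans (Par P Q) LTau (Par P' (psubst (inst A) Q'))"
| tr_commR: "trans P (LOut m A) P' \<Longrightarrow> trans Q (LInp m T) Q' \<Longrightarrow> typing [] A T \<Longrightarrow>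
             trans (Par Q P) LTau (Par (psubst (inst A) Q') P')"
| tr_cong: "scong P P1 \<Longrightarrow> typing [] P1 Pr \<Longrightarrow> trans P1 l P1' \<Longrightarrow> scong P1' P' \<Longrightarrow>
            typing (labctx l) P' Pr \<Longrightarrow> trans P l P'"

definition is_abs :: "trm \<Rightarrow> bool" where
  "is_abs P \<longleftrightarrow> (\<exists>T U P'. scong P (AbsP T P') \<and> typing [T] P' U)
               \<or> (\<exists>U A. scong P (AbsN A) \<and> typing [] A U)"

definition ho_bisim :: "(trm \<Rightarrow> trm \<Rightarrow> bool) \<Rightarrow> bool" where
  "ho_bisim R \<longleftrightarrow> (\<forall>P Q. R P Q \<longrightarrow> R Q P) \<and>
    (\<forall>P Q. R P Q \<longrightarrow>
       closedT P \<and> closedT Q \<and>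
       (\<not> is_abs P \<longrightarrow> \<not> is_abs Q) \<and>
       (\<forall>T U P'. scong P (AbsP T P') \<and> typing [T] P' U \<longrightarrow>
          (\<exists>Q'. scong Q (AbsP T Q') \<and>
             (\<forall>A. typing [] A T \<longrightarrow> R (psubst (inst A) P') (psubst (inst A) Q')))) \<and>
       (\<forall>U A. scong P (AbsN A) \<and> typing [] A U \<longrightarrow>
          (\<exists>B. scong Q (AbsN B) \<and> R A B)) \<and>
       (\<forall>a A P'. trans P (LOut (NC a) A) P' \<longrightarrow>
          (\<exists>B Q'. trans Q (LOut (NC a) B) Q' \<and> R A B \<and> R P' Q')) \<and>
       (\<forall>a T P'. trans P (LInp (NC a) T) P' \<longrightarrow>
          (\<exists>Q'. trans Q (LInp (NC a) T) Q' \<and>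
             (\<forall>A. typing [] A T \<longrightarrow> R (psubst (inst A) P') (psubst (inst A) Q')))) \<and>
       (\<forall>P'. trans P LTau P' \<longrightarrow> (\<exists>Q'. trans Q LTau Q' \<and> R P' Q')))"

definition ho_sim :: "trm \<Rightarrow> trm \<Rightarrow> bool" where
  "ho_sim P Q \<longleftrightarrow> (\<exists>R. ho_bisim R \<and> R P Q)"

text \<open>hpref h G P = h(X_1:T_1). ... .h(X_n:T_n). P where G = [T_n, ..., T_1]
  (G!i is the type of the process variable with de Bruijn index i; X_n has index 0).\<close>
fun hpref :: "nat \<Rightarrow> ty list \<Rightarrow> trm \<Rightarrow> trm" where
  "hpref h [] P = P"
| "hpref h (T # G) P = hpref h G (Inp (NC h) T P)"

end

theory Submission
  imports Defs "HOL-Library.Multiset" "HOL-Library.Confluence"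
begin

text \<open>An input prefix \<open>h(X:T).P\<close> can only perform its input on \<open>h\<close>, with residual \<open>P\<close>, and the
  bisimulation clause for inputs then demands \<open>P{A/X} \<sim> Q{A/X}\<close> for all closed \<open>A\<close> of type \<open>T\<close>.
  Conversely, pairs of prefixes with this property, together with bisimilarity closed under
  structural congruence, form a bisimulation.  So \<open>h(X:T).P \<sim> h(X:T).Q\<close> iff all closed instances
  of \<open>P\<close> and \<open>Q\<close> are bisimilar, and the theorem follows by peeling off the prefixes one by one.

  The substance lies in the first claim: structural congruence contains beta conversion, so it
  must be inverted.  Beta conversion and the unit law are oriented into a confluent parallel
  reduction that commutes with AC-equivalence of parallel compositions; hence congruent terms
  have AC-equivalent reducts, and the reducts of an input prefix are input prefixes.\<close>

section \<open>The substitution calculus\<close>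

abbreviation nshift :: "nat \<Rightarrow> nm" where
  "nshift \<equiv> \<lambda>j. NV (Suc j)"

lemma nmap_nmap: "nmap f (nmap g m) = nmap (\<lambda>i. nmap f (g i)) m"
  by (cases m) auto

lemma nmap_upn_upn: "(\<lambda>i. nmap (upn f) (upn g i)) = upn (\<lambda>i. nmap f (g i))"
proof
  fix i show "nmap (upn f) (upn g i) = upn (\<lambda>i. nmap f (g i)) i"
    by (cases i; cases "g (i - 1)") (auto simp: upn_def)
qed

lemma nsubst_nsubst: "nsubst f (nsubst g P) = nsubst (\<lambda>i. nmap f (g i)) P"
  by (induction P arbitrary: f g) (auto simp: nmap_nmap nmap_upn_upn)

lemma nsubst_NV: "nsubst NV P = P"
proof -
  have "upn NV = NV" by (auto simp: upn_def split: nat.split)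
  moreover have "nmap NV m = m" for m by (cases m) auto
  ultimately show ?thesis by (induction P) auto
qed

lemma nsubst_renP: "nsubst f (renP g P) = renP g (nsubst f P)"
  by (induction P arbitrary: f g) auto

lemma nsubst_psubst: "nsubst f (psubst s P) = psubst (\<lambda>i. nsubst f (s i)) (nsubst f P)"
proof (induction P arbitrary: f s)
  case (Inp m T P)
  have "(\<lambda>i. nsubst f (upp s i)) = upp (\<lambda>i. nsubst f (s i))"
    by (auto simp: upp_def nsubst_renP split: nat.split)
  then show ?case using Inp by simp
next
  case (AbsP T P)
  have "(\<lambda>i. nsubst f (upp s i)) = upp (\<lambda>i. nsubst f (s i))"
    by (auto simp: upp_def nsubst_renP split: nat.split)
  then show ?case using AbsP by simp
next
  case (AbsN P)
  have "nmap (upn f) (nshift i) = nmshift (f i)" for i by (simp add: upn_def)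
  moreover have "nmap nshift m = nmshift m" for m by (cases m) auto
  ultimately show ?case using AbsN by (simp add: nsubst_nsubst)
qed auto

lemma renP_renP: "renP f (renP g P) = renP (f \<circ> g) P"
proof -
  have "upr f \<circ> upr g = upr (f \<circ> g)" for f g by (auto simp: upr_def split: nat.split)
  then show ?thesis by (induction P arbitrary: f g) (auto simp flip: comp_def[of "upr _" "upr _"])
qed

lemma psubst_renP: "psubst s (renP f P) = psubst (s \<circ> f) P"
proof -
  have "(\<lambda>a. upp s (upr f a)) = upp (\<lambda>a. s (f a))" for s f
    by (auto simp: upp_def upr_def split: nat.split)
  then show ?thesis by (induction P arbitrary: s f) (auto simp: comp_def)
qed

lemma renP_psubst: "renP f (psubst s P) = psubst (\<lambda>i. renP f (s i)) P"
proof -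
  have "(\<lambda>i. renP (upr f) (upp s i)) = upp (\<lambda>i. renP f (s i))" for f s
    by (auto simp: upp_def renP_renP upr_def comp_def split: nat.split)
  then show ?thesis by (induction P arbitrary: s f) (auto simp: nsubst_renP)
qed

lemma psubst_psubst: "psubst s (psubst t P) = psubst (\<lambda>i. psubst s (t i)) P"
proof -
  have "(\<lambda>i. psubst (upp s) (upp t i)) = upp (\<lambda>i. psubst s (t i))" for s t
    by (auto simp: upp_def psubst_renP renP_psubst comp_def split: nat.split)
  then show ?thesis by (induction P arbitrary: s t) (auto simp: nsubst_psubst)
qed

lemma psubst_PVar: "psubst PVar P = P"
proof -
  have "upp PVar = PVar" by (auto simp: upp_def split: nat.split)
  then show ?thesis by (induction P) auto
qed

lemma renP_eq_psubst: "renP f P = psubst (\<lambda>i. PVar (f i)) P"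
  using renP_psubst[of f PVar P] by (simp add: psubst_PVar)

lemma psubst_inst: "psubst s (psubst (inst Q) P) = psubst (inst (psubst s Q)) (psubst (upp s) P)"
proof -
  have "psubst s (inst Q i) = psubst (inst (psubst s Q)) (upp s i)" for i
    using psubst_PVar by (cases i) (auto simp: inst_def upp_def psubst_renP comp_def)
  then show ?thesis by (simp add: psubst_psubst)
qed

lemma psubst_ninst:
  "psubst s (nsubst (ninst m) P) = nsubst (ninst m) (psubst (\<lambda>i. nsubst nshift (s i)) P)"
proof -
  have "(\<lambda>i. ninst m (Suc i)) = NV" by (simp add: ninst_def)
  then show ?thesis by (simp add: nsubst_psubst nsubst_nsubst nsubst_NV)
qed

lemma renP_inst: "renP f (psubst (inst Q) P) = psubst (inst (renP f Q)) (renP (upr f) P)"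
proof -
  have "(\<lambda>i. renP f (inst Q i)) = inst (renP f Q) \<circ> upr f"
    by (auto simp: inst_def upr_def split: nat.split)
  then show ?thesis by (simp add: renP_psubst psubst_renP)
qed

lemma nsubst_inst: "nsubst f (psubst (inst Q) P) = psubst (inst (nsubst f Q)) (nsubst f P)"
proof -
  have "(\<lambda>i. nsubst f (inst Q i)) = inst (nsubst f Q)"
    by (auto simp: inst_def split: nat.split)
  then show ?thesis by (simp add: nsubst_psubst)
qed

lemma nsubst_ninst: "nsubst f (nsubst (ninst m) P) = nsubst (ninst (nmap f m)) (nsubst (upn f) P)"
proof -
  have "nmap f (ninst m i) = nmap (ninst (nmap f m)) (upn f i)" for i
    by (cases i; cases "f (i - 1)") (auto simp: ninst_def upn_def)
  then show ?thesis by (simp add: nsubst_nsubst)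
qed

inductive_cases typing_InpE: "typing G (Inp m T P) U"

lemma upr_ctx:
  assumes "\<forall>i<length G. f i < length G' \<and> G' ! f i = G ! i"
  shows "\<forall>i<length (T#G). upr f i < length (T#G') \<and> (T#G') ! upr f i = (T#G) ! i"
  using assms by (auto simp: upr_def split: nat.split)

lemma typing_renP:
  "typing G P T \<Longrightarrow> (\<forall>i<length G. f i < length G' \<and> G' ! f i = G ! i) \<Longrightarrow> typing G' (renP f P) T"
proof (induction G P T arbitrary: G' f rule: typing.induct)
  case (t_var i G) then show ?case by (metis renP.simps(2) typing.t_var)
next
  case (t_inp T G P m) then show ?case using upr_ctx[of G f G' T] by (auto intro: typing.intros)
next
  case (t_absP T G P U) then show ?case using upr_ctx[of G f G' T] by (auto intro: typing.intros)
next
  case (t_appP G P T U Q) then show ?case by (metis renP.simps(7) typing.t_appP)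
qed (auto intro: typing.intros)

lemma typing_shift: "typing G P T \<Longrightarrow> typing (U#G) (renP Suc P) T"
  by (erule typing_renP) auto

lemma typing_nsubst: "typing G P T \<Longrightarrow> typing G (nsubst f P) T"
  by (induction G P T arbitrary: f rule: typing.induct) (auto intro: typing.intros)

lemma typing_upp:
  assumes "\<forall>i<length G. typing G' (s i) (G ! i)"
  shows "\<forall>i<length (T#G). typing (T#G') (upp s i) ((T#G) ! i)"
  using assms typing.t_var[of 0 "T#G'"] by (auto simp: upp_def typing_shift split: nat.split)

lemma typing_psubst:
  "typing G P T \<Longrightarrow> (\<forall>i<length G. typing G' (s i) (G ! i)) \<Longrightarrow> typing G' (psubst s P) T"
proof (induction G P T arbitrary: G' s rule: typing.induct)
  case (t_inp T G P m) then show ?case using typing_upp[of G G' s T] by (auto intro: typing.intros)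
next
  case (t_absP T G P U) then show ?case using typing_upp[of G G' s T] by (auto intro: typing.intros)
next
  case (t_absN G P U) then show ?case by (metis psubst.simps(8) typing.t_absN typing_nsubst)
next
  case (t_appP G P T U Q) then show ?case by (metis psubst.simps(7) typing.t_appP)
qed (auto intro: typing.intros)

lemma typing_inst: "typing [T] P U \<Longrightarrow> typing [] A T \<Longrightarrow> typing [] (psubst (inst A) P) U"
  by (erule typing_psubst) (auto simp: inst_def)

lemma typing_imp_closedT: "typing [] A T \<Longrightarrow> closedT A"
  unfolding closedT_def by blast

section \<open>Parallel reduction\<close>

inductive par_red :: "trm \<Rightarrow> trm \<Rightarrow> bool" where
  pr_nil: "par_red PNil PNil"
| pr_var: "par_red (PVar i) (PVar i)"
| pr_inp: "par_red P P' \<Longrightarrow> par_red (Inp m T P) (Inp m T P')"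
| pr_out: "par_red P P' \<Longrightarrow> par_red (Out m P) (Out m P')"
| pr_par: "par_red P P' \<Longrightarrow> par_red Q Q' \<Longrightarrow> par_red (Par P Q) (Par P' Q')"
| pr_absP: "par_red P P' \<Longrightarrow> par_red (AbsP T P) (AbsP T P')"
| pr_appP: "par_red P P' \<Longrightarrow> par_red Q Q' \<Longrightarrow> par_red (AppP P Q) (AppP P' Q')"
| pr_absN: "par_red P P' \<Longrightarrow> par_red (AbsN P) (AbsN P')"
| pr_appN: "par_red P P' \<Longrightarrow> par_red (AppN P m) (AppN P' m)"
| pr_beta: "par_red P P' \<Longrightarrow> par_red Q Q' \<Longrightarrow> par_red (AppP (AbsP T P) Q) (psubst (inst Q') P')"
| pr_nbeta: "par_red P P' \<Longrightarrow> par_red (AppN (AbsN P) m) (nsubst (ninst m) P')"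
| pr_nilR: "par_red P P' \<Longrightarrow> par_red (Par P PNil) P'"
| pr_nilL: "par_red P P' \<Longrightarrow> par_red (Par PNil P) P'"

inductive_cases par_red_PNilE: "par_red PNil X"
inductive_cases par_red_InpE: "par_red (Inp m T P) X"
inductive_cases par_red_OutE: "par_red (Out m P) X"
inductive_cases par_red_AbsPE: "par_red (AbsP T P) X"
inductive_cases par_red_AbsNE: "par_red (AbsN P) X"

lemma par_red_refl [simp, intro]: "par_red P P"
  by (induction P) (auto intro: par_red.intros)

lemma par_red_renP: "par_red P P' \<Longrightarrow> par_red (renP f P) (renP f P')"
proof (induction P P' arbitrary: f rule: par_red.induct)
  case (pr_beta P P' Q Q' T) then show ?case by (simp add: renP_inst par_red.pr_beta)
next
  case (pr_nbeta P P' m) then show ?case by (simp flip: nsubst_renP add: par_red.pr_nbeta)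
qed (auto intro: par_red.intros)

lemma par_red_nsubst: "par_red P P' \<Longrightarrow> par_red (nsubst f P) (nsubst f P')"
proof (induction P P' arbitrary: f rule: par_red.induct)
  case (pr_beta P P' Q Q' T) then show ?case by (simp add: nsubst_inst par_red.pr_beta)
next
  case (pr_nbeta P P' m) then show ?case by (simp add: nsubst_ninst par_red.pr_nbeta)
qed (auto intro: par_red.intros)

lemma par_red_upp: "\<forall>i. par_red (s i) (s' i) \<Longrightarrow> \<forall>i. par_red (upp s i) (upp s' i)"
  by (auto simp: upp_def par_red_renP split: nat.split)

lemma par_red_psubst:
  "par_red P P' \<Longrightarrow> (\<forall>i. par_red (s i) (s' i)) \<Longrightarrow> par_red (psubst s P) (psubst s' P')"
proof (induction P P' arbitrary: s s' rule: par_red.induct)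
  case (pr_inp P P' m T) then show ?case by (simp add: par_red.pr_inp par_red_upp)
next
  case (pr_absP P P' T) then show ?case by (simp add: par_red.pr_absP par_red_upp)
next
  case (pr_absN P P')
  then have "\<forall>i. par_red (nsubst nshift (s i)) (nsubst nshift (s' i))" by (simp add: par_red_nsubst)
  then show ?case using pr_absN.IH by (simp add: par_red.pr_absN)
next
  case (pr_beta P P' Q Q' T)
  then have "par_red (AppP (AbsP T (psubst (upp s) P)) (psubst s Q))
      (psubst (inst (psubst s' Q')) (psubst (upp s') P'))"
    by (auto intro!: par_red.intros par_red_upp)
  then show ?case by (simp add: psubst_inst)
next
  case (pr_nbeta P P' m)
  then have "\<forall>i. par_red (nsubst nshift (s i)) (nsubst nshift (s' i))" by (simp add: par_red_nsubst)
  then have "par_red (AppN (AbsN (psubst (\<lambda>i. nsubst nshift (s i)) P)) m)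
      (nsubst (ninst m) (psubst (\<lambda>i. nsubst nshift (s' i)) P'))"
    by (intro par_red.pr_nbeta pr_nbeta.IH)
  then show ?case by (simp add: psubst_ninst)
qed (auto intro: par_red.intros)

lemma par_red_inst: "par_red P P' \<Longrightarrow> par_red Q Q' \<Longrightarrow> par_red (psubst (inst Q) P) (psubst (inst Q') P')"
  by (erule par_red_psubst) (auto simp: inst_def split: nat.split)

fun cd :: "trm \<Rightarrow> trm" where
  "cd PNil = PNil"
| "cd (PVar i) = PVar i"
| "cd (Inp m T P) = Inp m T (cd P)"
| "cd (Out m P) = Out m (cd P)"
| "cd (Par P Q) = (if Q = PNil then cd P else if P = PNil then cd Q else Par (cd P) (cd Q))"
| "cd (AbsP T P) = AbsP T (cd P)"
| "cd (AppP (AbsP T P) Q) = psubst (inst (cd Q)) (cd P)"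
| "cd (AppP P Q) = AppP (cd P) (cd Q)"
| "cd (AbsN P) = AbsN (cd P)"
| "cd (AppN (AbsN P) m) = nsubst (ninst m) (cd P)"
| "cd (AppN P m) = AppN (cd P) m"

lemma par_red_cd: "par_red P Q \<Longrightarrow> par_red Q (cd P)"
proof (induction P Q rule: par_red.induct)
  case (pr_par P P' Q Q')
  then show ?case by (auto elim: par_red_PNilE intro: par_red.intros)
next
  case (pr_appP P P' Q Q')
  show ?case
  proof (cases "\<exists>T P0. P = AbsP T P0")
    case True
    then obtain T P0 where P: "P = AbsP T P0" by blast
    from pr_appP.hyps(1) obtain P0' where P': "P' = AbsP T P0'"
      unfolding P by (auto elim: par_red_AbsPE)
    from pr_appP.IH(1) have "par_red P0' (cd P0)"
      unfolding P P' by (auto elim: par_red_AbsPE)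
    then show ?thesis using P P' pr_appP.IH(2) by (auto intro: par_red.intros)
  next
    case False
    then have "cd (AppP P Q) = AppP (cd P) (cd Q)" by (cases P) auto
    then show ?thesis using pr_appP by (auto intro: par_red.intros)
  qed
next
  case (pr_appN P P' m)
  show ?case
  proof (cases "\<exists>P0. P = AbsN P0")
    case True
    then obtain P0 where P: "P = AbsN P0" by blast
    from pr_appN.hyps(1) obtain P0' where P': "P' = AbsN P0'"
      unfolding P by (auto elim: par_red_AbsNE)
    from pr_appN.IH have "par_red P0' (cd P0)"
      unfolding P P' by (auto elim: par_red_AbsNE)
    then show ?thesis using P P' by (auto intro: par_red.intros)
  next
    case False
    then have "cd (AppN P m) = AppN (cd P) m" by (cases P) auto
    then show ?thesis using pr_appN by (auto intro: par_red.intros)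
  qed
qed (auto intro: par_red.intros par_red_inst par_red_nsubst)

lemma confluentp_par_red: "confluentp par_red"
  by (intro strong_confluentp_imp_confluentp strong_confluentpI) (blast intro: par_red_cd)

lemma par_red_imp_scong: "par_red P P' \<Longrightarrow> scong P P'"
proof (induction P P' rule: par_red.induct)
  case (pr_beta P P' Q Q' T)
  then show ?case by (meson scong.sc_absP scong.sc_appP scong.sc_betaP scong.sc_trans)
next
  case (pr_nbeta P P' m)
  then show ?case by (meson scong.sc_absN scong.sc_appN scong.sc_betaN scong.sc_trans)
next
  case (pr_nilR P P')
  then show ?case by (meson scong.sc_nil scong.sc_trans)
next
  case (pr_nilL P P')
  then show ?case by (meson scong.sc_comm scong.sc_nil scong.sc_trans)
qed (auto intro: scong.intros)

lemma par_reds_imp_scong: "par_red\<^sup>*\<^sup>* P P' \<Longrightarrow> scong P P'"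
  by (induction rule: rtranclp_induct) (auto intro: scong.intros par_red_imp_scong)

lemma rtranclp_map:
  assumes "\<And>x y. r x y \<Longrightarrow> r (f x) (f y)" and "r\<^sup>*\<^sup>* x y"
  shows "r\<^sup>*\<^sup>* (f x) (f y)"
  using assms(2) by induction (auto intro: assms(1) rtranclp.rtrancl_into_rtrancl)

lemma rtranclp_map_inv:
  assumes "\<And>x y. r (f x) y \<Longrightarrow> \<exists>x'. y = f x' \<and> r x x'" and "r\<^sup>*\<^sup>* (f x) y"
  shows "\<exists>x'. y = f x' \<and> r\<^sup>*\<^sup>* x x'"
  using assms(2) by induction (auto dest!: assms(1) intro: rtranclp.rtrancl_into_rtrancl)

lemma par_reds_Par:
  assumes "par_red\<^sup>*\<^sup>* P P'" and "par_red\<^sup>*\<^sup>* Q Q'"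
  shows "par_red\<^sup>*\<^sup>* (Par P Q) (Par P' Q')"
proof -
  have "par_red\<^sup>*\<^sup>* (Par P Q) (Par P' Q)"
    using rtranclp_map[of par_red "\<lambda>P. Par P Q", OF _ assms(1)] by (blast intro: pr_par)
  also have "par_red\<^sup>*\<^sup>* (Par P' Q) (Par P' Q')"
    using rtranclp_map[of par_red "Par P'", OF _ assms(2)] by (blast intro: pr_par)
  finally show ?thesis .
qed

lemma par_reds_AppP:
  assumes "par_red\<^sup>*\<^sup>* P P'" and "par_red\<^sup>*\<^sup>* Q Q'"
  shows "par_red\<^sup>*\<^sup>* (AppP P Q) (AppP P' Q')"
proof -
  have "par_red\<^sup>*\<^sup>* (AppP P Q) (AppP P' Q)"
    using rtranclp_map[of par_red "\<lambda>P. AppP P Q", OF _ assms(1)] by (blast intro: pr_appP)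
  also have "par_red\<^sup>*\<^sup>* (AppP P' Q) (AppP P' Q')"
    using rtranclp_map[of par_red "AppP P'", OF _ assms(2)] by (blast intro: pr_appP)
  finally show ?thesis .
qed

lemmas par_reds_Inp = rtranclp_map[of par_red "Inp m T" for m T, OF pr_inp]
lemmas par_reds_Out = rtranclp_map[of par_red "Out m" for m, OF pr_out]
lemmas par_reds_AbsP = rtranclp_map[of par_red "AbsP T" for T, OF pr_absP]
lemmas par_reds_AbsN = rtranclp_map[of par_red AbsN, OF pr_absN]
lemmas par_reds_AppN = rtranclp_map[of par_red "\<lambda>P. AppN P m" for m, OF pr_appN]

lemma par_reds_PNilD: "par_red\<^sup>*\<^sup>* PNil X \<Longrightarrow> X = PNil"
  by (induction rule: rtranclp_induct) (auto elim: par_red_PNilE)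

lemma par_reds_InpD: "par_red\<^sup>*\<^sup>* (Inp m T P) X \<Longrightarrow> \<exists>P'. X = Inp m T P' \<and> par_red\<^sup>*\<^sup>* P P'"
  by (rule rtranclp_map_inv[of par_red "Inp m T"]) (auto elim: par_red_InpE)

lemma par_reds_OutD: "par_red\<^sup>*\<^sup>* (Out m P) X \<Longrightarrow> \<exists>P'. X = Out m P' \<and> par_red\<^sup>*\<^sup>* P P'"
  by (rule rtranclp_map_inv[of par_red "Out m"]) (auto elim: par_red_OutE)

lemma par_reds_AbsPD: "par_red\<^sup>*\<^sup>* (AbsP T P) X \<Longrightarrow> \<exists>P'. X = AbsP T P' \<and> par_red\<^sup>*\<^sup>* P P'"
  by (rule rtranclp_map_inv[of par_red "AbsP T"]) (auto elim: par_red_AbsPE)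

lemma par_reds_AbsND: "par_red\<^sup>*\<^sup>* (AbsN P) X \<Longrightarrow> \<exists>P'. X = AbsN P' \<and> par_red\<^sup>*\<^sup>* P P'"
  by (rule rtranclp_map_inv[of par_red AbsN]) (auto elim: par_red_AbsNE)

lemma par_red_ParD:
  "par_red (Par P Q) X \<Longrightarrow> (\<exists>P' Q'. X = Par P' Q' \<and> par_red P P' \<and> par_red Q Q') \<or>
     (Q = PNil \<and> par_red P X) \<or> (P = PNil \<and> par_red Q X)"
  by (erule par_red.cases) auto

lemma par_reds_ParD:
  "par_red\<^sup>*\<^sup>* (Par P Q) X \<Longrightarrow>
   (\<exists>P' Q'. X = Par P' Q' \<and> par_red\<^sup>*\<^sup>* P P' \<and> par_red\<^sup>*\<^sup>* Q Q') \<or>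
   (par_red\<^sup>*\<^sup>* Q PNil \<and> par_red\<^sup>*\<^sup>* P X) \<or> (par_red\<^sup>*\<^sup>* P PNil \<and> par_red\<^sup>*\<^sup>* Q X)"
proof (induction rule: rtranclp_induct)
  case (step Y X)
  from step.IH show ?case
  proof (elim disjE exE conjE)
    fix P' Q' assume "Y = Par P' Q'" "par_red\<^sup>*\<^sup>* P P'" "par_red\<^sup>*\<^sup>* Q Q'"
    with par_red_ParD[of P' Q' X] step.hyps(2) show ?thesis
      by (auto intro: rtranclp.rtrancl_into_rtrancl)
  qed (use step.hyps(2) in \<open>auto intro: rtranclp.rtrancl_into_rtrancl\<close>)
qed auto

section \<open>AC-equivalence of parallel compositions\<close>

lemma rel_mset_plus: "rel_mset R A C \<Longrightarrow> rel_mset R B D \<Longrightarrow> rel_mset R (A + B) (C + D)"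
  by (induction rule: rel_mset_induct) (auto intro: rel_mset_Plus)

lemma rel_mset_memberD: "rel_mset R M N \<Longrightarrow> x \<in># M \<Longrightarrow> \<exists>y\<in>#N. R x y"
  using multiset.set_transfer[THEN rel_funD, of R M N] by (auto simp: rel_set_def)

lemma rel_mset_single_iff: "rel_mset R {#x#} N \<longleftrightarrow> (\<exists>y. N = {#y#} \<and> R x y)"
proof
  assume "rel_mset R {#x#} N"
  from msed_rel_invL[OF this] show "\<exists>y. N = {#y#} \<and> R x y" by auto
qed (auto intro: rel_mset_Plus rel_mset_Zero)

lemma rel_mset_plus_leftE:
  assumes "rel_mset R (M1 + M2) N"
  obtains N1 N2 where "N = N1 + N2" "rel_mset R M1 N1" "rel_mset R M2 N2"
proof -
  have "\<exists>N1 N2. N = N1 + N2 \<and> rel_mset R M1 N1 \<and> rel_mset R M2 N2"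
    using assms
  proof (induction M1 arbitrary: N)
    case empty then show ?case by (auto simp: rel_mset_Zero)
  next
    case (add a M1)
    from msed_rel_invL[of R a "M1 + M2" N] add.prems obtain N' b where
      "N = add_mset b N'" "R a b" "rel_mset R (M1 + M2) N'" by auto
    with add.IH[of N'] show ?case
      by (metis add_mset_add_single rel_mset_Plus union_assoc union_commute)
  qed
  with that show thesis by blast
qed

lemma rel_mset_sum_mset:
  "rel_mset R M N \<Longrightarrow> (\<And>x y. R x y \<Longrightarrow> rel_mset S (f x) (g y)) \<Longrightarrow>
   rel_mset S (\<Sum>x\<in>#M. f x) (\<Sum>y\<in>#N. g y)"
proof (induction M arbitrary: N)
  case (add a M)
  from msed_rel_invL[OF add.prems(1)] obtain N1 b where
    "N = add_mset b N1" "R a b" "rel_mset R M N1" by blast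
  with add show ?case by (simp add: rel_mset_plus)
qed (simp add: rel_mset_Zero)

lemma rel_mset_join:
  "rel_mset S M N \<Longrightarrow> (\<And>x y. S x y \<Longrightarrow> \<exists>z. T x z \<and> U y z) \<Longrightarrow>
   \<exists>K. rel_mset T M K \<and> rel_mset U N K"
proof (induction M arbitrary: N)
  case (add a M)
  from msed_rel_invL[OF add.prems(1)] obtain N1 b where
    "N = add_mset b N1" "S a b" "rel_mset S M N1" by blast
  with add obtain K z where "rel_mset T M K" "rel_mset U N1 K" "T a z" "U b z" by meson
  then show ?case using \<open>N = _\<close> by (auto intro: rel_mset_Plus)
qed (auto simp: rel_mset_Zero)

fun is_par :: "trm \<Rightarrow> bool" where
  "is_par (Par P Q) = True"
| "is_par _ = False"

fun par_atoms_list :: "trm \<Rightarrow> trm list" where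
  "par_atoms_list (Par P Q) = par_atoms_list P @ par_atoms_list Q"
| "par_atoms_list P = [P]"

definition par_atoms :: "trm \<Rightarrow> trm multiset" where
  "par_atoms P = mset (par_atoms_list P)"

lemma par_atoms_Par [simp]: "par_atoms (Par P Q) = par_atoms P + par_atoms Q"
  by (simp add: par_atoms_def)

lemma par_atoms_non_par: "\<not> is_par X \<Longrightarrow> par_atoms X = {#X#}"
  by (cases X) (auto simp: par_atoms_def)

lemma par_atoms_not_empty [simp]: "par_atoms X \<noteq> {#}"
  by (induction X) (auto simp: par_atoms_def)

lemma size_par_atoms_ge: "is_par X \<Longrightarrow> size (par_atoms X) \<ge> 2"
proof (cases X)
  case (Par P Q)
  have "0 < size (par_atoms Y)" for Y by (cases "par_atoms Y") auto
  from this[of P] this[of Q] Par show ?thesis by simp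
qed simp_all

lemma size_par_atom_le: "x \<in># par_atoms X \<Longrightarrow> size x \<le> size X"
  by (induction X) (auto simp: par_atoms_def)

lemma size_par_atom_less: "is_par X \<Longrightarrow> x \<in># par_atoms X \<Longrightarrow> size x < size X"
proof (cases X)
  case (Par P Q)
  assume "x \<in># par_atoms X"
  with Par show ?thesis using size_par_atom_le[of x P] size_par_atom_le[of x Q] by auto
qed simp_all

lemma par_atoms_hom:
  "(\<And>P Q. F (Par P Q) = Par (F P) (F Q)) \<Longrightarrow> par_atoms (F X) = (\<Sum>x\<in>#par_atoms X. par_atoms (F x))"
  by (induction X) (auto simp: par_atoms_non_par)

text \<open>Matching the atoms of two compositions as multisets absorbs associativity and
  commutativity of \<open>Par\<close>.\<close>

inductive ac_eq :: "trm \<Rightarrow> trm \<Rightarrow> bool" where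
  ac_par: "is_par A \<Longrightarrow> is_par B \<Longrightarrow> rel_mset ac_eq (par_atoms A) (par_atoms B) \<Longrightarrow> ac_eq A B"
| ac_nil: "ac_eq PNil PNil"
| ac_var: "ac_eq (PVar i) (PVar i)"
| ac_inp: "ac_eq P P' \<Longrightarrow> ac_eq (Inp m T P) (Inp m T P')"
| ac_out: "ac_eq P P' \<Longrightarrow> ac_eq (Out m P) (Out m P')"
| ac_absP: "ac_eq P P' \<Longrightarrow> ac_eq (AbsP T P) (AbsP T P')"
| ac_appP: "ac_eq P P' \<Longrightarrow> ac_eq Q Q' \<Longrightarrow> ac_eq (AppP P Q) (AppP P' Q')"
| ac_absN: "ac_eq P P' \<Longrightarrow> ac_eq (AbsN P) (AbsN P')"
| ac_appN: "ac_eq P P' \<Longrightarrow> ac_eq (AppN P m) (AppN P' m)"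
monos multiset.rel_mono

inductive_cases ac_eq_PNilE: "ac_eq PNil X"
inductive_cases ac_eq_InpE: "ac_eq (Inp m T P) X"
inductive_cases ac_eq_OutE: "ac_eq (Out m P) X"
inductive_cases ac_eq_AbsPE: "ac_eq (AbsP T P) X"
inductive_cases ac_eq_AbsNE: "ac_eq (AbsN P) X"
inductive_cases ac_eq_AppPE: "ac_eq (AppP P Q) X"
inductive_cases ac_eq_AppNE: "ac_eq (AppN P m) X"

lemma ac_eq_refl [simp, intro]: "ac_eq X X"
proof (induction X rule: measure_induct_rule[of size])
  case (less X)
  show ?case
  proof (cases "is_par X")
    case True
    have "rel_mset ac_eq (par_atoms X) (par_atoms X)"
      by (rule multiset.rel_refl_strong) (use less size_par_atom_less[OF True] in blast)
    then show ?thesis by (rule ac_par[OF True True])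
  next
    case False
    then show ?thesis using less by (cases X) (auto intro: ac_eq.intros(2-9))
  qed
qed

lemma ac_eq_sym: "ac_eq A B \<Longrightarrow> ac_eq B A"
proof (induction rule: ac_eq.induct)
  case (ac_par A B)
  have "rel_mset (\<lambda>y x. ac_eq x y \<and> ac_eq y x) (par_atoms B) (par_atoms A)"
    using ac_par(3) multiset.rel_flip[symmetric, of _ "par_atoms B" "par_atoms A"]
    by (simp add: conversep_iff[abs_def])
  then have "rel_mset ac_eq (par_atoms B) (par_atoms A)" by (rule multiset.rel_mono_strong) auto
  with ac_par show ?case by (auto intro: ac_eq.ac_par)
qed (auto intro: ac_eq.intros(2-9))

lemma ac_eq_is_par: "ac_eq A B \<Longrightarrow> is_par A = is_par B"
  by (erule ac_eq.cases) auto

lemma ac_eq_par_atoms: "ac_eq A B \<Longrightarrow> rel_mset ac_eq (par_atoms A) (par_atoms B)"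
proof (cases "is_par A")
  case True
  assume "ac_eq A B"
  then show ?thesis by (cases rule: ac_eq.cases) (use True in auto)
next
  case False
  assume "ac_eq A B"
  with False have "\<not> is_par B" using ac_eq_is_par by blast
  with False \<open>ac_eq A B\<close> show ?thesis by (simp add: par_atoms_non_par rel_mset_single_iff)
qed

lemma par_atoms_ac_eq: "rel_mset ac_eq (par_atoms A) (par_atoms B) \<Longrightarrow> ac_eq A B"
proof -
  assume r: "rel_mset ac_eq (par_atoms A) (par_atoms B)"
  have sz: "size (par_atoms A) = size (par_atoms B)" using rel_mset_size[OF r] .
  show ?thesis
  proof (cases "is_par A"; cases "is_par B")
    assume "is_par A" "is_par B" then show ?thesis using r by (rule ac_par)
  next
    assume "is_par A" "\<not> is_par B"
    then show ?thesis using sz size_par_atoms_ge[of A] by (simp add: par_atoms_non_par)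
  next
    assume "\<not> is_par A" "is_par B"
    then show ?thesis using sz size_par_atoms_ge[of B] by (simp add: par_atoms_non_par)
  next
    assume "\<not> is_par A" "\<not> is_par B"
    then show ?thesis using r by (simp add: par_atoms_non_par rel_mset_single_iff)
  qed
qed

lemma ac_eq_trans: "ac_eq A B \<Longrightarrow> ac_eq B C \<Longrightarrow> ac_eq A C"
proof (induction arbitrary: C rule: ac_eq.induct)
  case (ac_par A B)
  have "(rel_mset (\<lambda>x y. ac_eq x y \<and> (\<forall>C. ac_eq y C \<longrightarrow> ac_eq x C)) OO rel_mset ac_eq)
      (par_atoms A) (par_atoms C)"
    using ac_par(3) ac_eq_par_atoms[OF ac_par(4)] by (rule relcomppI)
  then have "rel_mset ((\<lambda>x y. ac_eq x y \<and> (\<forall>C. ac_eq y C \<longrightarrow> ac_eq x C)) OO ac_eq)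
      (par_atoms A) (par_atoms C)"
    by (simp only: multiset.rel_compp)
  then have "rel_mset ac_eq (par_atoms A) (par_atoms C)" by (rule multiset.rel_mono_strong) auto
  then show ?case by (rule par_atoms_ac_eq)
next
  case (ac_inp P P' m T) from ac_inp.prems show ?case by (cases rule: ac_eq.cases) (auto intro: ac_eq.intros(2-9) ac_inp.IH)
next
  case (ac_out P P' m) from ac_out.prems show ?case by (cases rule: ac_eq.cases) (auto intro: ac_eq.intros(2-9) ac_out.IH)
next
  case (ac_absP P P' T) from ac_absP.prems show ?case by (cases rule: ac_eq.cases) (auto intro: ac_eq.intros(2-9) ac_absP.IH)
next
  case (ac_appP P P' Q Q') from ac_appP.prems show ?case by (cases rule: ac_eq.cases) (auto intro: ac_eq.intros(2-9) ac_appP.IH)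
next
  case (ac_absN P P') from ac_absN.prems show ?case by (cases rule: ac_eq.cases) (auto intro: ac_eq.intros(2-9) ac_absN.IH)
next
  case (ac_appN P P' m) from ac_appN.prems show ?case by (cases rule: ac_eq.cases) (auto intro: ac_eq.intros(2-9) ac_appN.IH)
qed simp_all

lemma ac_eq_Par: "ac_eq P P' \<Longrightarrow> ac_eq Q Q' \<Longrightarrow> ac_eq (Par P Q) (Par P' Q')"
  by (rule ac_par) (simp_all, intro rel_mset_plus ac_eq_par_atoms)

lemma ac_eq_par_hom:
  assumes "rel_mset (\<lambda>x y. ac_eq x y \<and> \<Phi> x y) (par_atoms A) (par_atoms B)"
    and "\<And>x y. \<Phi> x y \<Longrightarrow> ac_eq (F x) (G y)"
    and "\<And>P Q. F (Par P Q) = Par (F P) (F Q)" and "\<And>P Q. G (Par P Q) = Par (G P) (G Q)"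
  shows "ac_eq (F A) (G B)"
proof (rule par_atoms_ac_eq)
  have "rel_mset ac_eq (\<Sum>x\<in>#par_atoms A. par_atoms (F x)) (\<Sum>y\<in>#par_atoms B. par_atoms (G y))"
    by (rule rel_mset_sum_mset[OF assms(1)]) (simp add: ac_eq_par_atoms assms(2))
  then show "rel_mset ac_eq (par_atoms (F A)) (par_atoms (G B))"
    using par_atoms_hom[of F A, OF assms(3)] par_atoms_hom[of G B, OF assms(4)] by argo
qed

lemma ac_eq_renP: "ac_eq A B \<Longrightarrow> ac_eq (renP f A) (renP f B)"
proof (induction arbitrary: f rule: ac_eq.induct)
  case (ac_par A B) show ?case by (rule ac_eq_par_hom[OF ac_par(3)]) auto
qed (auto intro: ac_eq.intros(2-9))

lemma ac_eq_nsubst: "ac_eq A B \<Longrightarrow> ac_eq (nsubst f A) (nsubst f B)"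
proof (induction arbitrary: f rule: ac_eq.induct)
  case (ac_par A B) show ?case by (rule ac_eq_par_hom[OF ac_par(3)]) auto
qed (auto intro: ac_eq.intros(2-9))

lemma ac_eq_psubst: "ac_eq A B \<Longrightarrow> (\<forall>i. ac_eq (s i) (s' i)) \<Longrightarrow> ac_eq (psubst s A) (psubst s' B)"
proof (induction arbitrary: s s' rule: ac_eq.induct)
  case (ac_par A B)
  show ?case by (rule ac_eq_par_hom[OF ac_par(3)]) (use ac_par.prems in auto)
next
  case (ac_inp P P' m T)
  have "\<forall>i. ac_eq (upp s i) (upp s' i)"
    using ac_inp.prems by (auto simp: upp_def ac_eq_renP split: nat.split)
  then show ?case using ac_inp.IH by (simp add: ac_eq.ac_inp)
next
  case (ac_absP P P' T)
  have "\<forall>i. ac_eq (upp s i) (upp s' i)"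
    using ac_absP.prems by (auto simp: upp_def ac_eq_renP split: nat.split)
  then show ?case using ac_absP.IH by (simp add: ac_eq.ac_absP)
next
  case (ac_absN P P')
  have "\<forall>i. ac_eq (nsubst nshift (s i)) (nsubst nshift (s' i))"
    using ac_absN.prems by (simp add: ac_eq_nsubst)
  then show ?case using ac_absN.IH by (simp add: ac_eq.ac_absN)
qed (auto intro: ac_eq.intros(2-9))

section \<open>Parallel reduction commutes with AC-equivalence\<close>

text \<open>A reduction step of a parallel composition acts on each of its atoms separately; an atom
  \<open>PNil\<close> may also be erased, which is recorded as \<open>None\<close>.\<close>

definition atom_step :: "(trm \<Rightarrow> trm \<Rightarrow> bool) \<Rightarrow> trm \<Rightarrow> trm option \<Rightarrow> bool" where
  "atom_step r a u \<longleftrightarrow> (u = None \<and> a = PNil) \<or> (\<exists>a'. u = Some a' \<and> r a a')"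

fun opt_par_atoms :: "trm option \<Rightarrow> trm multiset" where
  "opt_par_atoms None = {#}"
| "opt_par_atoms (Some a) = par_atoms a"

lemma rel_mset_atom_step_PNil: "rel_mset (atom_step r) (par_atoms PNil) {#None#}"
  by (simp add: par_atoms_non_par rel_mset_single_iff atom_step_def)

lemma par_red_par_atoms:
  "par_red A A' \<Longrightarrow>
   \<exists>Os. rel_mset (atom_step par_red) (par_atoms A) Os \<and> par_atoms A' = (\<Sum>u\<in>#Os. opt_par_atoms u)"
proof (induction A arbitrary: A')
  case (Par P Q)
  from par_red_ParD[OF Par.prems] show ?case
  proof (elim disjE exE conjE)
    fix P' Q' assume a: "A' = Par P' Q'" "par_red P P'" "par_red Q Q'"
    from Par.IH(1)[OF a(2)] Par.IH(2)[OF a(3)] obtain O1 O2 where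
      "rel_mset (atom_step par_red) (par_atoms P) O1" "par_atoms P' = (\<Sum>u\<in>#O1. opt_par_atoms u)"
      "rel_mset (atom_step par_red) (par_atoms Q) O2" "par_atoms Q' = (\<Sum>u\<in>#O2. opt_par_atoms u)"
      by blast
    with a(1) show ?thesis by (intro exI[of _ "O1 + O2"]) (auto intro: rel_mset_plus)
  next
    assume "Q = PNil" "par_red P A'"
    with Par.IH(1) obtain O1 where
      r: "rel_mset (atom_step par_red) (par_atoms P) O1" and "par_atoms A' = (\<Sum>u\<in>#O1. opt_par_atoms u)"
      by blast
    moreover have "rel_mset (atom_step par_red) (par_atoms (Par P Q)) (O1 + {#None#})"
      using rel_mset_plus[OF r rel_mset_atom_step_PNil] \<open>Q = PNil\<close> by simp
    ultimately show ?thesis by (intro exI[of _ "O1 + {#None#}"]) simp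
  next
    assume "P = PNil" "par_red Q A'"
    with Par.IH(2) obtain O2 where
      r: "rel_mset (atom_step par_red) (par_atoms Q) O2" and "par_atoms A' = (\<Sum>u\<in>#O2. opt_par_atoms u)"
      by blast
    moreover have "rel_mset (atom_step par_red) (par_atoms (Par P Q)) ({#None#} + O2)"
      using rel_mset_plus[OF rel_mset_atom_step_PNil r] \<open>P = PNil\<close> by simp
    ultimately show ?thesis by (intro exI[of _ "{#None#} + O2"]) simp
  qed
qed (auto simp: par_atoms_non_par rel_mset_single_iff atom_step_def intro!: exI[of _ "{#Some _#}"])

lemma par_reds_PNil_if_par_atoms_PNil: "(\<forall>a\<in>#par_atoms P. a = PNil) \<Longrightarrow> par_red\<^sup>*\<^sup>* P PNil"
proof (induction P)
  case (Par P1 P2)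
  then have "par_red\<^sup>*\<^sup>* (Par P1 P2) (Par PNil PNil)" by (simp add: par_reds_Par)
  also have "par_red (Par PNil PNil) PNil" by (intro pr_nilR pr_nil)
  finally show ?case .
qed (auto simp: par_atoms_non_par)

lemma par_atoms_PNil_if_sum_empty:
  assumes "rel_mset (atom_step par_red\<^sup>*\<^sup>*) (par_atoms X) Os" and "(\<Sum>u\<in>#Os. opt_par_atoms u) = {#}"
  shows "\<forall>a\<in>#par_atoms X. a = PNil"
proof
  fix a assume "a \<in># par_atoms X"
  from rel_mset_memberD[OF assms(1) this] obtain u where u: "u \<in># Os" "atom_step par_red\<^sup>*\<^sup>* a u"
    by blast
  have "opt_par_atoms u = {#}" using assms(2) multi_member_split[OF u(1)] by auto
  then show "a = PNil" using u(2) by (cases u) (auto simp: atom_step_def)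
qed

lemma par_reds_from_par_atoms:
  "rel_mset (atom_step par_red\<^sup>*\<^sup>*) (par_atoms B) Os \<Longrightarrow> (\<Sum>u\<in>#Os. opt_par_atoms u) \<noteq> {#} \<Longrightarrow>
   \<exists>B'. par_red\<^sup>*\<^sup>* B B' \<and> par_atoms B' = (\<Sum>u\<in>#Os. opt_par_atoms u)"
proof (induction B arbitrary: Os)
  case (Par P Q)
  from Par.prems(1) obtain O1 O2 where
    u: "Os = O1 + O2" "rel_mset (atom_step par_red\<^sup>*\<^sup>*) (par_atoms P) O1"
      "rel_mset (atom_step par_red\<^sup>*\<^sup>*) (par_atoms Q) O2"
    by (auto elim: rel_mset_plus_leftE)
  consider "(\<Sum>u\<in>#O1. opt_par_atoms u) = {#}" | "(\<Sum>u\<in>#O2. opt_par_atoms u) = {#}"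
    | "(\<Sum>u\<in>#O1. opt_par_atoms u) \<noteq> {#}" "(\<Sum>u\<in>#O2. opt_par_atoms u) \<noteq> {#}"
    by blast
  then show ?case
  proof cases
    case 1
    with Par.prems(2) u(1) have "(\<Sum>u\<in>#O2. opt_par_atoms u) \<noteq> {#}" by simp
    with Par.IH(2) u(3) obtain Q' where "par_red\<^sup>*\<^sup>* Q Q'" "par_atoms Q' = (\<Sum>u\<in>#O2. opt_par_atoms u)"
      by blast
    moreover have "par_red\<^sup>*\<^sup>* P PNil"
      using 1 u(2) by (intro par_reds_PNil_if_par_atoms_PNil par_atoms_PNil_if_sum_empty)
    ultimately have "par_red\<^sup>*\<^sup>* (Par P Q) Q'"
      using pr_nilL[OF par_red_refl] by (meson par_reds_Par rtranclp.rtrancl_into_rtrancl)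
    with \<open>par_atoms Q' = _\<close> u(1) 1 show ?thesis by auto
  next
    case 2
    with Par.prems(2) u(1) have "(\<Sum>u\<in>#O1. opt_par_atoms u) \<noteq> {#}" by simp
    with Par.IH(1) u(2) obtain P' where "par_red\<^sup>*\<^sup>* P P'" "par_atoms P' = (\<Sum>u\<in>#O1. opt_par_atoms u)"
      by blast
    moreover have "par_red\<^sup>*\<^sup>* Q PNil"
      using 2 u(3) by (intro par_reds_PNil_if_par_atoms_PNil par_atoms_PNil_if_sum_empty)
    ultimately have "par_red\<^sup>*\<^sup>* (Par P Q) P'"
      using pr_nilR[OF par_red_refl] by (meson par_reds_Par rtranclp.rtrancl_into_rtrancl)
    with \<open>par_atoms P' = _\<close> u(1) 2 show ?thesis by auto
  next
    case 3
    with Par.IH u obtain P' Q' where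
      "par_red\<^sup>*\<^sup>* P P'" "par_atoms P' = (\<Sum>u\<in>#O1. opt_par_atoms u)"
      "par_red\<^sup>*\<^sup>* Q Q'" "par_atoms Q' = (\<Sum>u\<in>#O2. opt_par_atoms u)"
      by meson
    with u(1) show ?thesis by (intro exI[of _ "Par P' Q'"]) (auto simp: par_reds_Par)
  qed
qed (auto simp: par_atoms_non_par rel_mset_single_iff atom_step_def)

lemma atom_step_ac_eq_commute:
  assumes "ac_eq a b" and "atom_step par_red a u"
    and commute: "\<And>a'. par_red a a' \<Longrightarrow> \<exists>b'. par_red\<^sup>*\<^sup>* b b' \<and> ac_eq a' b'"
  shows "\<exists>v. atom_step par_red\<^sup>*\<^sup>* b v \<and> rel_option ac_eq u v"
proof (cases u)
  case None
  with assms(1,2) have "b = PNil" by (auto simp: atom_step_def elim: ac_eq_PNilE)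
  with None show ?thesis by (intro exI[of _ None]) (simp add: atom_step_def)
next
  case (Some a')
  with assms(2) commute obtain b' where "par_red\<^sup>*\<^sup>* b b'" "ac_eq a' b'"
    by (auto simp: atom_step_def)
  with Some show ?thesis by (intro exI[of _ "Some b'"]) (simp add: atom_step_def)
qed

lemma ac_eq_par_red_commute_par_atoms:
  assumes atoms_commute: "\<And>a b a'. a \<in># par_atoms A \<Longrightarrow> ac_eq a b \<Longrightarrow> par_red a a' \<Longrightarrow>
      \<exists>b'. par_red\<^sup>*\<^sup>* b b' \<and> ac_eq a' b'"
    and "ac_eq A B" and "par_red A A'"
  shows "\<exists>B'. par_red\<^sup>*\<^sup>* B B' \<and> ac_eq A' B'"
proof -
  from par_red_par_atoms[OF assms(3)] obtain Os where
    d: "rel_mset (atom_step par_red) (par_atoms A) Os" and A': "par_atoms A' = (\<Sum>u\<in>#Os. opt_par_atoms u)"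
    by blast
  have "rel_mset (conversep ac_eq) (par_atoms B) (par_atoms A)"
    using ac_eq_par_atoms[OF assms(2)] multiset.rel_flip[of ac_eq "par_atoms B" "par_atoms A"] by simp
  moreover have "rel_mset (\<lambda>a u. atom_step par_red a u \<and> a \<in># par_atoms A) (par_atoms A) Os"
    by (rule multiset.rel_mono_strong[OF d]) auto
  ultimately have S: "rel_mset (conversep ac_eq OO (\<lambda>a u. atom_step par_red a u \<and> a \<in># par_atoms A))
      (par_atoms B) Os"
    unfolding multiset.rel_compp by (rule relcomppI)
  let ?opt_ac_eq = "rel_option ac_eq"
  have step: "\<exists>v. atom_step par_red\<^sup>*\<^sup>* b v \<and> ?opt_ac_eq u v"
    if "(conversep ac_eq OO (\<lambda>a u. atom_step par_red a u \<and> a \<in># par_atoms A)) b u" for b u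
    using that atom_step_ac_eq_commute atoms_commute by blast
  obtain K where
    K: "rel_mset (atom_step par_red\<^sup>*\<^sup>*) (par_atoms B) K" "rel_mset ?opt_ac_eq Os K"
    using rel_mset_join[OF S, of "atom_step par_red\<^sup>*\<^sup>*" ?opt_ac_eq] step by blast
  have sums: "rel_mset ac_eq (\<Sum>u\<in>#Os. opt_par_atoms u) (\<Sum>u\<in>#K. opt_par_atoms u)"
    by (rule rel_mset_sum_mset[OF K(2)]) (erule option.rel_cases; simp add: ac_eq_par_atoms)
  have "(\<Sum>u\<in>#K. opt_par_atoms u) \<noteq> {#}"
  proof
    assume "(\<Sum>u\<in>#K. opt_par_atoms u) = {#}"
    with rel_mset_size[OF sums] have "par_atoms A' = {#}" by (simp add: A')
    then show False by simp
  qed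
  from par_reds_from_par_atoms[OF K(1) this] obtain B' where
    "par_red\<^sup>*\<^sup>* B B'" "par_atoms B' = (\<Sum>u\<in>#K. opt_par_atoms u)"
    by blast
  moreover have "ac_eq A' B'" by (rule par_atoms_ac_eq) (use sums A' \<open>par_atoms B' = _\<close> in simp)
  ultimately show ?thesis by blast
qed

lemma ac_eq_pr_beta_commute:
  assumes "ac_eq (AppP (AbsP T P) Q) B"
    and P: "\<And>B. ac_eq P B \<Longrightarrow> \<exists>B'. par_red\<^sup>*\<^sup>* B B' \<and> ac_eq P' B'"
    and Q: "\<And>B. ac_eq Q B \<Longrightarrow> \<exists>B'. par_red\<^sup>*\<^sup>* B B' \<and> ac_eq Q' B'"
  shows "\<exists>B'. par_red\<^sup>*\<^sup>* B B' \<and> ac_eq (psubst (inst Q') P') B'"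
proof -
  from assms(1) obtain M2 Q2 where "B = AppP M2 Q2" "ac_eq (AbsP T P) M2" "ac_eq Q Q2"
    by (auto elim: ac_eq_AppPE)
  then obtain P2 where B: "B = AppP (AbsP T P2) Q2" "ac_eq P P2" "ac_eq Q Q2"
    by (auto elim: ac_eq_AbsPE)
  from P[OF B(2)] obtain P2' where P2': "par_red\<^sup>*\<^sup>* P2 P2'" "ac_eq P' P2'" by blast
  from Q[OF B(3)] obtain Q2' where Q2': "par_red\<^sup>*\<^sup>* Q2 Q2'" "ac_eq Q' Q2'" by blast
  have "par_red\<^sup>*\<^sup>* B (AppP (AbsP T P2') Q2')"
    using B P2' Q2' by (simp add: par_reds_AppP par_reds_AbsP)
  also have "par_red (AppP (AbsP T P2') Q2') (psubst (inst Q2') P2')"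
    by (intro par_red.pr_beta par_red_refl)
  finally show ?thesis
    using ac_eq_psubst[OF P2'(2), of "inst Q'" "inst Q2'"] Q2'(2)
    by (auto simp: inst_def split: nat.split)
qed

lemma ac_eq_pr_nbeta_commute:
  assumes "ac_eq (AppN (AbsN P) m) B"
    and P: "\<And>B. ac_eq P B \<Longrightarrow> \<exists>B'. par_red\<^sup>*\<^sup>* B B' \<and> ac_eq P' B'"
  shows "\<exists>B'. par_red\<^sup>*\<^sup>* B B' \<and> ac_eq (nsubst (ninst m) P') B'"
proof -
  from assms(1) obtain M2 where "B = AppN M2 m" "ac_eq (AbsN P) M2"
    by (auto elim: ac_eq_AppNE)
  then obtain P2 where B: "B = AppN (AbsN P2) m" "ac_eq P P2"
    by (auto elim: ac_eq_AbsNE)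
  from P[OF B(2)] obtain P2' where P2': "par_red\<^sup>*\<^sup>* P2 P2'" "ac_eq P' P2'" by blast
  have "par_red\<^sup>*\<^sup>* B (AppN (AbsN P2') m)" using B P2' by (simp add: par_reds_AppN par_reds_AbsN)
  also have "par_red (AppN (AbsN P2') m) (nsubst (ninst m) P2')" by (intro par_red.pr_nbeta par_red_refl)
  finally show ?thesis using ac_eq_nsubst[OF P2'(2)] by auto
qed

lemma ac_eq_par_red_commute: "ac_eq A B \<Longrightarrow> par_red A A' \<Longrightarrow> \<exists>B'. par_red\<^sup>*\<^sup>* B B' \<and> ac_eq A' B'"
proof (induction A arbitrary: B A' rule: measure_induct_rule[of size])
  case (less A)
  note IH = less.IH
  show ?case
  proof (cases "is_par A")
    case True
    show ?thesis
    proof (rule ac_eq_par_red_commute_par_atoms[OF _ less.prems])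
      fix a b a' assume "a \<in># par_atoms A" "ac_eq a b" "par_red a a'"
      with True show "\<exists>b'. par_red\<^sup>*\<^sup>* b b' \<and> ac_eq a' b'" by (blast intro: IH size_par_atom_less)
    qed
  next
    case False
    from less.prems(2) show ?thesis
    proof (cases rule: par_red.cases)
      case (pr_inp P P' m T)
      with less.prems(1) obtain P2 where "B = Inp m T P2" "ac_eq P P2" by (auto elim: ac_eq_InpE)
      moreover from this(2) IH[of P] pr_inp obtain P2' where "par_red\<^sup>*\<^sup>* P2 P2'" "ac_eq P' P2'" by auto
      ultimately show ?thesis using pr_inp by (auto intro: par_reds_Inp ac_eq.ac_inp)
    next
      case (pr_out P P' m)
      with less.prems(1) obtain P2 where "B = Out m P2" "ac_eq P P2" by (auto elim: ac_eq_OutE)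
      moreover from this(2) IH[of P] pr_out obtain P2' where "par_red\<^sup>*\<^sup>* P2 P2'" "ac_eq P' P2'" by auto
      ultimately show ?thesis using pr_out by (auto intro: par_reds_Out ac_eq.ac_out)
    next
      case (pr_absP P P' T)
      with less.prems(1) obtain P2 where "B = AbsP T P2" "ac_eq P P2" by (auto elim: ac_eq_AbsPE)
      moreover from this(2) IH[of P] pr_absP obtain P2' where "par_red\<^sup>*\<^sup>* P2 P2'" "ac_eq P' P2'" by auto
      ultimately show ?thesis using pr_absP by (auto intro: par_reds_AbsP ac_eq.ac_absP)
    next
      case (pr_absN P P')
      with less.prems(1) obtain P2 where "B = AbsN P2" "ac_eq P P2" by (auto elim: ac_eq_AbsNE)
      moreover from this(2) IH[of P] pr_absN obtain P2' where "par_red\<^sup>*\<^sup>* P2 P2'" "ac_eq P' P2'" by auto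
      ultimately show ?thesis using pr_absN by (auto intro: par_reds_AbsN ac_eq.ac_absN)
    next
      case (pr_appN P P' m)
      with less.prems(1) obtain P2 where "B = AppN P2 m" "ac_eq P P2" by (auto elim: ac_eq_AppNE)
      moreover from this(2) IH[of P] pr_appN obtain P2' where "par_red\<^sup>*\<^sup>* P2 P2'" "ac_eq P' P2'" by auto
      ultimately show ?thesis using pr_appN by (auto intro: par_reds_AppN ac_eq.ac_appN)
    next
      case (pr_appP P P' Q Q')
      with less.prems(1) obtain P2 Q2 where "B = AppP P2 Q2" "ac_eq P P2" "ac_eq Q Q2"
        by (auto elim: ac_eq_AppPE)
      moreover from this IH[of P] pr_appP obtain P2' where "par_red\<^sup>*\<^sup>* P2 P2'" "ac_eq P' P2'" by auto
      moreover from calculation IH[of Q] pr_appP obtain Q2' where "par_red\<^sup>*\<^sup>* Q2 Q2'" "ac_eq Q' Q2'"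
        by auto
      ultimately show ?thesis using pr_appP by (auto intro: par_reds_AppP ac_eq.ac_appP)
    next
      case (pr_beta P P' Q Q' T)
      from less.prems(1)[unfolded pr_beta(1)]
      have "\<exists>B'. par_red\<^sup>*\<^sup>* B B' \<and> ac_eq (psubst (inst Q') P') B'"
        by (rule ac_eq_pr_beta_commute) (use pr_beta IH[of P] IH[of Q] in auto)
      with pr_beta(2) show ?thesis by simp
    next
      case (pr_nbeta P P' m)
      from less.prems(1)[unfolded pr_nbeta(1)]
      have "\<exists>B'. par_red\<^sup>*\<^sup>* B B' \<and> ac_eq (nsubst (ninst m) P') B'"
        by (rule ac_eq_pr_nbeta_commute) (use pr_nbeta IH[of P] in auto)
      with pr_nbeta(2) show ?thesis by simp
    qed (use False less.prems(1) in auto)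
  qed
qed

lemma ac_eq_par_reds_commute: "par_red\<^sup>*\<^sup>* A A' \<Longrightarrow> ac_eq A B \<Longrightarrow> \<exists>B'. par_red\<^sup>*\<^sup>* B B' \<and> ac_eq A' B'"
proof (induction rule: rtranclp_induct)
  case (step A0 A')
  then obtain B0 where "par_red\<^sup>*\<^sup>* B B0" "ac_eq A0 B0" by blast
  with ac_eq_par_red_commute[OF this(2) step(2)] show ?case by (meson rtranclp_trans)
qed blast

section \<open>Inversion of structural congruence\<close>

declare scong.sc_trans [trans]

fun par_list :: "trm list \<Rightarrow> trm" where
  "par_list [] = PNil"
| "par_list [x] = x"
| "par_list (x # y # ys) = Par x (par_list (y # ys))"

lemma par_list_Cons: "xs \<noteq> [] \<Longrightarrow> par_list (x # xs) = Par x (par_list xs)"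
  by (cases xs) auto

lemma scong_par_list_append:
  "xs \<noteq> [] \<Longrightarrow> ys \<noteq> [] \<Longrightarrow> scong (Par (par_list xs) (par_list ys)) (par_list (xs @ ys))"
proof (induction xs)
  case (Cons x xs)
  show ?case
  proof (cases "xs = []")
    case True then show ?thesis using Cons by (simp add: par_list_Cons scong.sc_refl)
  next
    case False
    have "scong (Par (Par x (par_list xs)) (par_list ys)) (Par x (Par (par_list xs) (par_list ys)))"
      by (rule sc_assoc)
    also have "scong \<dots> (Par x (par_list (xs @ ys)))"
      using Cons False by (auto intro: scong.intros)
    finally show ?thesis using False Cons by (simp add: par_list_Cons)
  qed
qed simp

lemma scong_par_list_par_atoms: "scong X (par_list (par_atoms_list X))"
proof (induction X)
  case (Par P Q)
  have "par_atoms_list Y \<noteq> []" for Y by (induction Y) auto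
  then have "scong (Par (par_list (par_atoms_list P)) (par_list (par_atoms_list Q)))
      (par_list (par_atoms_list P @ par_atoms_list Q))"
    by (intro scong_par_list_append)
  with Par show ?case by (auto intro: scong.sc_trans scong.sc_par)
qed (auto intro: scong.intros)

lemma scong_par_list: "list_all2 scong xs ys \<Longrightarrow> scong (par_list xs) (par_list ys)"
proof (induction rule: list_all2_induct)
  case (Cons x xs y ys)
  then have "xs = [] \<longleftrightarrow> ys = []" by (auto dest: list_all2_lengthD)
  with Cons show ?case by (cases "xs = []") (auto simp: par_list_Cons scong.sc_par)
qed (simp add: scong.sc_refl)

lemma scong_par_list_swap: "scong (Par x (par_list (y # r))) (Par y (par_list (x # r)))"
proof (cases "r = []")
  case False
  have "scong (Par x (Par y (par_list r))) (Par (Par x y) (par_list r))"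
    by (meson scong.sc_assoc scong.sc_sym)
  also have "scong \<dots> (Par (Par y x) (par_list r))"
    by (meson scong.sc_comm scong.sc_par scong.sc_refl)
  also have "scong \<dots> (Par y (Par x (par_list r)))" by (rule scong.sc_assoc)
  finally show ?thesis using False by (simp add: par_list_Cons)
qed (simp add: scong.sc_comm)

lemma scong_par_list_move: "scong (par_list (x # l1 @ l2)) (par_list (l1 @ x # l2))"
proof (induction l1)
  case (Cons y l1)
  have "scong (par_list (x # (y # l1) @ l2)) (Par y (par_list (x # l1 @ l2)))"
    using scong_par_list_swap by simp
  also have "scong \<dots> (Par y (par_list (l1 @ x # l2)))"
    using Cons by (meson scong.sc_par scong.sc_refl)
  finally show ?case by (simp add: par_list_Cons)
qed (simp add: scong.sc_refl)

lemma scong_par_list_perm: "mset xs = mset ys \<Longrightarrow> scong (par_list xs) (par_list ys)"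
proof (induction xs arbitrary: ys)
  case (Cons x xs)
  then obtain l1 l2 where ys: "ys = l1 @ x # l2"
    by (metis list.set_intros(1) set_mset_mset split_list)
  with Cons.prems have m: "mset xs = mset (l1 @ l2)" by simp
  have "scong (par_list (x # xs)) (par_list (x # l1 @ l2))"
  proof (cases "xs = []")
    case False
    then have "l1 @ l2 \<noteq> []" using m by auto
    with False Cons.IH[OF m] show ?thesis by (simp add: par_list_Cons scong.sc_par scong.sc_refl)
  qed (use m in \<open>simp add: scong.sc_refl\<close>)
  then show ?case using ys scong_par_list_move by (metis scong.sc_trans)
qed (simp add: scong.sc_refl)

lemma ac_eq_imp_scong: "ac_eq A B \<Longrightarrow> scong A B"
proof (induction rule: ac_eq.induct)
  case (ac_par A B)
  have "rel_mset scong (par_atoms A) (par_atoms B)" by (rule multiset.rel_mono_strong[OF ac_par(3)]) auto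
  then obtain xs ys where l: "mset xs = par_atoms A" "mset ys = par_atoms B" "list_all2 scong xs ys"
    unfolding rel_mset_def by blast
  have "scong A (par_list (par_atoms_list A))" by (rule scong_par_list_par_atoms)
  also have "scong \<dots> (par_list xs)"
    by (rule scong_par_list_perm) (use l in \<open>simp add: par_atoms_def\<close>)
  also have "scong \<dots> (par_list ys)" by (rule scong_par_list[OF l(3)])
  also have "scong \<dots> (par_list (par_atoms_list B))"
    by (rule scong_par_list_perm) (use l in \<open>simp add: par_atoms_def\<close>)
  also have "scong \<dots> B" by (rule scong.sc_sym, rule scong_par_list_par_atoms)
  finally show ?case .
qed (auto intro: scong.intros)

definition joinable :: "trm \<Rightarrow> trm \<Rightarrow> bool" where
  "joinable P Q \<longleftrightarrow> (\<exists>P' Q'. par_red\<^sup>*\<^sup>* P P' \<and> par_red\<^sup>*\<^sup>* Q Q' \<and> ac_eq P' Q')"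

lemma par_red_imp_joinable: "par_red P Q \<Longrightarrow> joinable P Q"
  unfolding joinable_def by (meson ac_eq_refl r_into_rtranclp rtranclp.rtrancl_refl)

lemma joinable_trans:
  assumes "joinable P Q" and "joinable Q R"
  shows "joinable P R"
proof -
  from assms obtain P1 Q1 Q2 R2 where
    a: "par_red\<^sup>*\<^sup>* P P1" "par_red\<^sup>*\<^sup>* Q Q1" "ac_eq P1 Q1"
      "par_red\<^sup>*\<^sup>* Q Q2" "par_red\<^sup>*\<^sup>* R R2" "ac_eq Q2 R2"
    unfolding joinable_def by blast
  from confluentpD[OF confluentp_par_red a(2) a(4)] obtain C where
    c: "par_red\<^sup>*\<^sup>* Q1 C" "par_red\<^sup>*\<^sup>* Q2 C" by blast
  from ac_eq_par_reds_commute[OF c(1) ac_eq_sym[OF a(3)]] obtain P3 where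
    "par_red\<^sup>*\<^sup>* P1 P3" "ac_eq C P3" by blast
  moreover from ac_eq_par_reds_commute[OF c(2) a(6)] obtain R3 where
    "par_red\<^sup>*\<^sup>* R2 R3" "ac_eq C R3" by blast
  ultimately show ?thesis
    unfolding joinable_def using a(1) a(5) by (meson ac_eq_sym ac_eq_trans rtranclp_trans)
qed

lemma scong_iff_joinable: "scong P Q \<longleftrightarrow> joinable P Q"
proof
  show "scong P Q \<Longrightarrow> joinable P Q"
  proof (induction rule: scong.induct)
    case (sc_sym P Q) then show ?case unfolding joinable_def by (meson ac_eq_sym)
  next
    case (sc_trans P Q R) from sc_trans.IH show ?case by (rule joinable_trans)
  next
    case (sc_inp P P' m T) then show ?case unfolding joinable_def by (meson par_reds_Inp ac_eq.ac_inp)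
  next
    case (sc_out P P' m) then show ?case unfolding joinable_def by (meson par_reds_Out ac_eq.ac_out)
  next
    case (sc_par P P' Q Q') then show ?case unfolding joinable_def by (meson par_reds_Par ac_eq_Par)
  next
    case (sc_absP P P' T) then show ?case unfolding joinable_def by (meson par_reds_AbsP ac_eq.ac_absP)
  next
    case (sc_appP P P' Q Q') then show ?case unfolding joinable_def by (meson par_reds_AppP ac_eq.ac_appP)
  next
    case (sc_absN P P') then show ?case unfolding joinable_def by (meson par_reds_AbsN ac_eq.ac_absN)
  next
    case (sc_appN P P' m) then show ?case unfolding joinable_def by (meson par_reds_AppN ac_eq.ac_appN)
  next
    case (sc_assoc P Q R)
    have "ac_eq (Par (Par P Q) R) (Par P (Par Q R))"
      by (rule ac_par) (auto simp: add.assoc intro: multiset.rel_refl_strong)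
    then show ?case unfolding joinable_def by blast
  next
    case (sc_comm P Q)
    have "ac_eq (Par P Q) (Par Q P)"
      by (rule ac_par) (auto simp: add.commute intro: multiset.rel_refl_strong)
    then show ?case unfolding joinable_def by blast
  qed (blast intro: par_red_imp_joinable par_red.intros par_red_refl)+
next
  show "joinable P Q \<Longrightarrow> scong P Q"
    unfolding joinable_def by (meson ac_eq_imp_scong par_reds_imp_scong scong.sc_sym scong.sc_trans)
qed

lemma scong_joinE:
  assumes "scong P Q"
  obtains P' Q' where "par_red\<^sup>*\<^sup>* P P'" "par_red\<^sup>*\<^sup>* Q Q'" "ac_eq P' Q'"
  using assms by (auto simp: scong_iff_joinable joinable_def)

lemma scong_InpD: "scong (Inp m T P) (Inp m' T' Q) \<Longrightarrow> m = m' \<and> T = T' \<and> scong P Q"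
proof (erule scong_joinE)
  fix X Y assume "par_red\<^sup>*\<^sup>* (Inp m T P) X" "par_red\<^sup>*\<^sup>* (Inp m' T' Q) Y" "ac_eq X Y"
  then obtain P' Q' where "par_red\<^sup>*\<^sup>* P P'" "par_red\<^sup>*\<^sup>* Q Q'" "m = m'" "T = T'" "ac_eq P' Q'"
    by (auto dest!: par_reds_InpD elim: ac_eq_InpE)
  then show ?thesis unfolding scong_iff_joinable joinable_def by blast
qed

lemma not_scong_Inp_PNil: "\<not> scong (Inp m T P) PNil"
  by (auto elim!: scong_joinE dest!: par_reds_InpD par_reds_PNilD elim: ac_eq_InpE)

lemma not_scong_Out_PNil: "\<not> scong (Out m P) PNil"
  by (auto elim!: scong_joinE dest!: par_reds_OutD par_reds_PNilD elim: ac_eq_OutE)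

lemma not_scong_Out_Inp: "\<not> scong (Out m P) (Inp m' T Q)"
  by (auto elim!: scong_joinE dest!: par_reds_OutD par_reds_InpD elim: ac_eq_OutE)

lemma not_scong_Inp_AbsP: "\<not> scong (Inp m T P) (AbsP T' Q)"
  by (auto elim!: scong_joinE dest!: par_reds_InpD par_reds_AbsPD elim: ac_eq_InpE)

lemma not_scong_Inp_AbsN: "\<not> scong (Inp m T P) (AbsN Q)"
  by (auto elim!: scong_joinE dest!: par_reds_InpD par_reds_AbsND elim: ac_eq_InpE)

lemma scong_ParD:
  assumes "scong (Par P Q) Z" and "\<And>Y. par_red\<^sup>*\<^sup>* Z Y \<Longrightarrow> \<not> is_par Y"
  shows "(scong P PNil \<and> scong Q Z) \<or> (scong Q PNil \<and> scong P Z)"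
proof -
  from assms(1) obtain X Y where j: "par_red\<^sup>*\<^sup>* (Par P Q) X" "par_red\<^sup>*\<^sup>* Z Y" "ac_eq X Y"
    by (rule scong_joinE)
  have "\<not> is_par X" using assms(2)[OF j(2)] ac_eq_is_par[OF j(3)] by simp
  moreover have "scong X Z"
    using j by (meson ac_eq_imp_scong par_reds_imp_scong scong.sc_sym scong.sc_trans)
  ultimately show ?thesis using par_reds_ParD[OF j(1)]
    by (auto dest: par_reds_imp_scong intro: scong.sc_trans)
qed

lemma par_reds_PNil_not_par: "par_red\<^sup>*\<^sup>* PNil Y \<Longrightarrow> \<not> is_par Y"
  by (auto dest: par_reds_PNilD)

lemma par_reds_Inp_not_par: "par_red\<^sup>*\<^sup>* (Inp m T Q) Y \<Longrightarrow> \<not> is_par Y"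
  by (auto dest: par_reds_InpD)

lemma scong_psubst: "scong P P' \<Longrightarrow> scong (psubst s P) (psubst s P')"
proof (induction P P' arbitrary: s rule: scong.induct)
  case (sc_betaP T P Q) then show ?case by (simp add: psubst_inst scong.sc_betaP)
next
  case (sc_betaN P m) then show ?case by (simp add: psubst_ninst scong.sc_betaN)
qed (auto intro: scong.intros)

lemma scong_renP: "scong P P' \<Longrightarrow> scong (renP f P) (renP f P')"
  by (simp add: renP_eq_psubst scong_psubst)

lemma trans_typing: "trans P l P' \<Longrightarrow> typing [] P T \<Longrightarrow> typing (labctx l) P' Pr"
proof (induction P l P' arbitrary: T rule: trans.induct)
  case (tr_parL P l P' Q)
  from tr_parL.prems obtain "typing [] P Pr" "typing [] Q Pr" by (auto elim: typing.cases)
  with tr_parL.IH show ?case by (cases l) (auto intro!: typing.intros typing_shift)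
next
  case (tr_parR P l P' Q)
  from tr_parR.prems obtain "typing [] P Pr" "typing [] Q Pr" by (auto elim: typing.cases)
  with tr_parR.IH show ?case by (cases l) (auto intro!: typing.intros typing_shift)
next
  case (tr_commL P m A P' Q T Q')
  from tr_commL.prems obtain "typing [] P Pr" "typing [] Q Pr" by (auto elim: typing.cases)
  with tr_commL show ?case by (fastforce intro!: typing.intros typing_inst)
next
  case (tr_commR P m A P' Q T Q')
  from tr_commR.prems obtain "typing [] P Pr" "typing [] Q Pr" by (auto elim: typing.cases)
  with tr_commR show ?case by (fastforce intro!: typing.intros typing_inst)
qed (auto elim: typing.cases intro: typing.intros)

text \<open>Rule \<open>tr_cong\<close> asks for a well-typed intermediate process; every rule yields one.\<close>

lemma trans_via_typed: "trans X l X' \<Longrightarrow> typing [] X T \<Longrightarrow> \<exists>P. typing [] P Pr \<and> scong X P \<and> trans P l X'"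
proof (induction X l X' rule: trans.induct)
  case (tr_cong P P1 l P1' P')
  then show ?case by (meson scong.sc_refl trans.tr_cong)
qed (auto elim: typing.cases intro: scong.sc_refl trans.intros)

lemma trans_scong: "scong X0 X \<Longrightarrow> closedT X \<Longrightarrow> trans X l X' \<Longrightarrow> trans X0 l X'"
proof -
  assume a: "scong X0 X" "closedT X" "trans X l X'"
  then obtain T where T: "typing [] X T" by (auto simp: closedT_def)
  from trans_via_typed[OF a(3) T] obtain P where
    "typing [] P Pr" "scong X P" "trans P l X'" by blast
  with trans_typing[OF a(3) T] a(1) show ?thesis by (meson scong.sc_refl scong.sc_trans trans.tr_cong)
qed

lemma trans_not_scong_PNil: "trans X l X' \<Longrightarrow> \<not> scong X PNil"
proof (induction rule: trans.induct)
  case (tr_cong P P1 l P1' P')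
  then show ?case by (meson scong.sc_sym scong.sc_trans)
qed (use not_scong_Inp_PNil not_scong_Out_PNil scong_ParD par_reds_PNil_not_par in blast)+

lemma trans_scong_Inp: "trans X l X' \<Longrightarrow> scong X (Inp m T R) \<Longrightarrow> l = LInp m T \<and> scong X' R"
proof (induction arbitrary: m T R rule: trans.induct)
  case (tr_inp m T P)
  then show ?case by (blast dest: scong_InpD)
next
  case (tr_out m Q)
  then show ?case using not_scong_Out_Inp by blast
next
  case (tr_parL P l P' Q)
  from scong_ParD[OF tr_parL.prems par_reds_Inp_not_par[of m T R]] trans_not_scong_PNil[OF tr_parL.hyps]
  have Q: "scong Q PNil" and P: "scong P (Inp m T R)" by blast+
  from tr_parL.IH[OF P] have l: "l = LInp m T" and "scong P' R" by blast+
  moreover have "scong (lift_lab l Q) PNil" using l scong_renP[OF Q, of Suc] by simp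
  ultimately have "scong (Par P' (lift_lab l Q)) (Par R PNil)" by (simp add: scong.sc_par)
  with l show ?case by (meson scong.sc_nil scong.sc_trans)
next
  case (tr_parR P l P' Q)
  from scong_ParD[OF tr_parR.prems par_reds_Inp_not_par[of m T R]] trans_not_scong_PNil[OF tr_parR.hyps]
  have Q: "scong Q PNil" and P: "scong P (Inp m T R)" by blast+
  from tr_parR.IH[OF P] have l: "l = LInp m T" and "scong P' R" by blast+
  moreover have "scong (lift_lab l Q) PNil" using l scong_renP[OF Q, of Suc] by simp
  ultimately have "scong (Par (lift_lab l Q) P') (Par PNil R)" by (simp add: scong.sc_par)
  with l show ?case by (meson scong.sc_comm scong.sc_nil scong.sc_trans)
next
  case (tr_commL P m' A P' Q' T' Q'')
  then show ?case using scong_ParD[OF _ par_reds_Inp_not_par[of m T R]] trans_not_scong_PNil by blast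
next
  case (tr_commR P m' A P' Q' T' Q'')
  then show ?case using scong_ParD[OF _ par_reds_Inp_not_par[of m T R]] trans_not_scong_PNil by blast
next
  case (tr_cong P P1 l P1' P')
  then show ?case by (meson scong.sc_sym scong.sc_trans)
qed

section \<open>Bisimilarity up to structural congruence\<close>

definition ho_progress :: "(trm \<Rightarrow> trm \<Rightarrow> bool) \<Rightarrow> trm \<Rightarrow> trm \<Rightarrow> bool" where
  "ho_progress R P Q \<longleftrightarrow>
       closedT P \<and> closedT Q \<and>
       (\<not> is_abs P \<longrightarrow> \<not> is_abs Q) \<and>
       (\<forall>T U P'. scong P (AbsP T P') \<and> typing [T] P' U \<longrightarrow>
          (\<exists>Q'. scong Q (AbsP T Q') \<and>
             (\<forall>A. typing [] A T \<longrightarrow> R (psubst (inst A) P') (psubst (inst A) Q')))) \<and>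
       (\<forall>U A. scong P (AbsN A) \<and> typing [] A U \<longrightarrow>
          (\<exists>B. scong Q (AbsN B) \<and> R A B)) \<and>
       (\<forall>a A P'. trans P (LOut (NC a) A) P' \<longrightarrow>
          (\<exists>B Q'. trans Q (LOut (NC a) B) Q' \<and> R A B \<and> R P' Q')) \<and>
       (\<forall>a T P'. trans P (LInp (NC a) T) P' \<longrightarrow>
          (\<exists>Q'. trans Q (LInp (NC a) T) Q' \<and>
             (\<forall>A. typing [] A T \<longrightarrow> R (psubst (inst A) P') (psubst (inst A) Q')))) \<and>
       (\<forall>P'. trans P LTau P' \<longrightarrow> (\<exists>Q'. trans Q LTau Q' \<and> R P' Q'))"

lemma ho_bisim_iff: "ho_bisim R \<longleftrightarrow> symp R \<and> (\<forall>P Q. R P Q \<longrightarrow> ho_progress R P Q)"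
  unfolding ho_bisim_def ho_progress_def symp_def by blast

lemma ho_progress_mono: "ho_progress R P Q \<Longrightarrow> (\<And>x y. R x y \<Longrightarrow> R' x y) \<Longrightarrow> ho_progress R' P Q"
  unfolding ho_progress_def by meson

lemma ho_sim_progress: "ho_sim P Q \<Longrightarrow> ho_progress ho_sim P Q"
proof -
  assume "ho_sim P Q"
  then obtain R where R: "ho_bisim R" "R P Q" unfolding ho_sim_def by blast
  then have "ho_progress R P Q" unfolding ho_bisim_iff by blast
  then show ?thesis by (rule ho_progress_mono) (use R(1) in \<open>auto simp: ho_sim_def\<close>)
qed

lemma ho_sim_sym: "ho_sim P Q \<Longrightarrow> ho_sim Q P"
  unfolding ho_sim_def ho_bisim_def by blast

lemma ho_sim_closedT: "ho_sim P Q \<Longrightarrow> closedT P \<and> closedT Q"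
  using ho_sim_progress ho_progress_def by blast

lemma is_abs_scong: "scong X Y \<Longrightarrow> is_abs Y \<Longrightarrow> is_abs X"
  unfolding is_abs_def by (meson scong.sc_trans)

lemma not_is_abs_Inp: "\<not> is_abs (Inp m T Q)"
  unfolding is_abs_def using not_scong_Inp_AbsN not_scong_Inp_AbsP by blast

lemma ho_progress_scong:
  assumes R0: "ho_progress R X0 Y0" and "scong X X0" and "scong Y0 Y"
    and "closedT X" and "closedT Y"
  shows "ho_progress R X Y"
proof -
  note R0' = R0[unfolded ho_progress_def]
  have X0: "scong X0 X" and Y: "scong Y Y0" using assms(2,3) by (simp_all add: scong.sc_sym)
  have transX: "trans X l P' \<Longrightarrow> trans X0 l P'" for l P' by (rule trans_scong[OF X0 assms(4)])
  have transY: "trans Y0 l Q' \<Longrightarrow> trans Y l Q'" for l Q' using R0' trans_scong[OF Y] by blast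
  have scongX: "scong X Z \<Longrightarrow> scong X0 Z" and scongY: "scong Y0 Z \<Longrightarrow> scong Y Z" for Z
    using X0 Y by (meson scong.sc_trans)+
  show ?thesis
    using assms(4,5) R0' transX transY scongX scongY is_abs_scong[OF assms(2)] is_abs_scong[OF assms(3)]
    unfolding ho_progress_def by (elim conjE) (intro conjI allI impI; metis)
qed

definition input_pair :: "trm \<Rightarrow> trm \<Rightarrow> bool" where
  "input_pair X Y \<longleftrightarrow> (\<exists>m T P Q. X = Inp m T P \<and> Y = Inp m T Q \<and>
      typing [T] P Pr \<and> typing [T] Q Pr \<and>
      (\<forall>A. typing [] A T \<longrightarrow> ho_sim (psubst (inst A) P) (psubst (inst A) Q)))"

definition ho_sim_upto :: "trm \<Rightarrow> trm \<Rightarrow> bool" where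
  "ho_sim_upto X Y \<longleftrightarrow> closedT X \<and> closedT Y \<and>
     (\<exists>X0 Y0. scong X X0 \<and> scong Y0 Y \<and> (ho_sim X0 Y0 \<or> input_pair X0 Y0))"

lemma ho_sim_upto_if_scong:
  "ho_sim X0 Y0 \<Longrightarrow> scong X X0 \<Longrightarrow> scong Y0 Y \<Longrightarrow> closedT X \<Longrightarrow> closedT Y \<Longrightarrow> ho_sim_upto X Y"
  unfolding ho_sim_upto_def by blast

lemma ho_sim_upto_if_ho_sim: "ho_sim X Y \<Longrightarrow> ho_sim_upto X Y"
  using ho_sim_closedT by (blast intro: ho_sim_upto_if_scong scong.sc_refl)

lemma input_pair_progress:
  assumes "input_pair X Y"
  shows "ho_progress ho_sim_upto X Y"
proof -
  from assms obtain m T P Q where X: "X = Inp m T P" and Y: "Y = Inp m T Q"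
    and P: "typing [T] P Pr" and Q: "typing [T] Q Pr"
    and PQ: "\<forall>A. typing [] A T \<longrightarrow> ho_sim (psubst (inst A) P) (psubst (inst A) Q)"
    unfolding input_pair_def by blast
  have tX: "typing [] X Pr" and tY: "typing [] Y Pr" using X Y P Q by (simp_all add: t_inp)
  have no_abs: "\<not> scong X (AbsP T' P')" "\<not> scong X (AbsN A)" for T' P' A
    using X not_scong_Inp_AbsP not_scong_Inp_AbsN by blast+
  have inp: "l = LInp m T \<and> scong P' P" if "trans X l P'" for l P'
    using trans_scong_Inp[OF that] X scong.sc_refl by blast
  have "trans Y (LInp m T) Q" using Y by (simp add: tr_inp)
  moreover have "ho_sim_upto (psubst (inst A) P') (psubst (inst A) Q)"
    if "trans X (LInp m T) P'" "typing [] A T" for P' A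
  proof (rule ho_sim_upto_if_scong)
    show "scong (psubst (inst A) P') (psubst (inst A) P)" using inp[OF that(1)] scong_psubst by blast
    show "ho_sim (psubst (inst A) P) (psubst (inst A) Q)" using PQ that(2) by blast
    have "typing [T] P' Pr" using trans_typing[OF that(1) tX] by simp
    then show "closedT (psubst (inst A) P')" using that(2) by (blast intro: typing_imp_closedT typing_inst)
    show "closedT (psubst (inst A) Q)" using Q that(2) by (blast intro: typing_imp_closedT typing_inst)
  qed (rule scong.sc_refl)
  ultimately show ?thesis
    unfolding ho_progress_def using tX tY X Y inp no_abs not_is_abs_Inp typing_imp_closedT by blast
qed

lemma input_pair_sym: "input_pair X Y \<Longrightarrow> input_pair Y X"
  unfolding input_pair_def using ho_sim_sym by blast

lemma ho_bisim_ho_sim_upto: "ho_bisim ho_sim_upto"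
  unfolding ho_bisim_iff
proof (intro conjI allI impI sympI)
  fix P Q assume "ho_sim_upto P Q"
  then show "ho_sim_upto Q P"
    unfolding ho_sim_upto_def using ho_sim_sym input_pair_sym scong.sc_sym by blast
next
  fix P Q assume "ho_sim_upto P Q"
  then obtain X0 Y0 where "closedT P" "closedT Q" "scong P X0" "scong Y0 Q"
    and "ho_sim X0 Y0 \<or> input_pair X0 Y0"
    unfolding ho_sim_upto_def by blast
  moreover have "ho_progress ho_sim_upto X0 Y0" if "ho_sim X0 Y0"
    using ho_sim_progress[OF that] by (rule ho_progress_mono) (rule ho_sim_upto_if_ho_sim)
  ultimately show "ho_progress ho_sim_upto P Q" by (blast intro: ho_progress_scong input_pair_progress)
qed

lemma ho_sim_scong:
  assumes "ho_sim X0 Y0" and "scong X X0" and "scong Y0 Y" and "closedT X" and "closedT Y"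
  shows "ho_sim X Y"
  unfolding ho_sim_def using ho_bisim_ho_sim_upto ho_sim_upto_if_scong[OF assms] by blast

lemma ho_sim_Inp_iff:
  assumes P: "typing [T] P Pr" and Q: "typing [T] Q Pr"
  shows "ho_sim (Inp (NC a) T P) (Inp (NC a) T Q) \<longleftrightarrow>
    (\<forall>A. typing [] A T \<longrightarrow> ho_sim (psubst (inst A) P) (psubst (inst A) Q))"
proof
  assume PQ: "ho_sim (Inp (NC a) T P) (Inp (NC a) T Q)"
  show "\<forall>A. typing [] A T \<longrightarrow> ho_sim (psubst (inst A) P) (psubst (inst A) Q)"
  proof (intro allI impI)
    fix A assume A: "typing [] A T"
    from ho_sim_progress[OF PQ] tr_inp obtain Q' where
      Q': "trans (Inp (NC a) T Q) (LInp (NC a) T) Q'" "ho_sim (psubst (inst A) P) (psubst (inst A) Q')"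
      unfolding ho_progress_def using A by blast
    have "scong (psubst (inst A) Q') (psubst (inst A) Q)"
      using trans_scong_Inp[OF Q'(1) scong.sc_refl] by (blast intro: scong_psubst)
    with Q'(2) show "ho_sim (psubst (inst A) P) (psubst (inst A) Q)"
      using P Q A by (meson ho_sim_scong scong.sc_refl typing_inst typing_imp_closedT)
  qed
next
  assume "\<forall>A. typing [] A T \<longrightarrow> ho_sim (psubst (inst A) P) (psubst (inst A) Q)"
  with P Q have "input_pair (Inp (NC a) T P) (Inp (NC a) T Q)" unfolding input_pair_def by blast
  with P Q have "ho_sim_upto (Inp (NC a) T P) (Inp (NC a) T Q)"
    unfolding ho_sim_upto_def by (blast intro: scong.sc_refl typing_imp_closedT t_inp)
  then show "ho_sim (Inp (NC a) T P) (Inp (NC a) T Q)"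
    unfolding ho_sim_def using ho_bisim_ho_sim_upto by blast
qed

definition subst_list :: "trm list \<Rightarrow> nat \<Rightarrow> trm" where
  "subst_list Rs i = (if i < length Rs then Rs ! i else PVar (i - length Rs))"

lemma ssubst_eq_psubst: "ssubst Rs P = psubst (subst_list Rs) P"
  by (simp add: ssubst_def subst_list_def[abs_def])

lemma ssubst_Nil [simp]: "ssubst [] P = P"
proof -
  have "subst_list [] = PVar" by (simp add: subst_list_def fun_eq_iff)
  then show ?thesis by (simp add: ssubst_eq_psubst psubst_PVar)
qed

lemma ssubst_Inp: "ssubst Rs (Inp m T P) = Inp m T (psubst (upp (subst_list Rs)) P)"
  by (simp add: ssubst_eq_psubst)

lemma ssubst_Cons: "ssubst (A # Rs) P = psubst (inst A) (psubst (upp (subst_list Rs)) P)"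
proof -
  have "subst_list (A # Rs) = (\<lambda>i. psubst (inst A) (upp (subst_list Rs) i))"
    using psubst_PVar by (auto simp: fun_eq_iff subst_list_def inst_def upp_def psubst_renP comp_def
        split: nat.split)
  then show ?thesis by (simp add: ssubst_eq_psubst psubst_psubst)
qed

lemma typing_ssubst: "typing G P U \<Longrightarrow> list_all2 (typing []) Rs G \<Longrightarrow> typing [] (ssubst Rs P) U"
  by (auto simp: ssubst_def list_all2_conv_all_nth intro: typing_psubst)

lemma ho_sim_hpref_iff:
  assumes "typing G P Pr" and "typing G Q Pr"
  shows "ho_sim (hpref h G P) (hpref h G Q) \<longleftrightarrow>
    (\<forall>Rs. list_all2 (typing []) Rs G \<longrightarrow> ho_sim (ssubst Rs P) (ssubst Rs Q))"
  using assms
proof (induction G arbitrary: P Q)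
  case (Cons T G)
  let ?body = "\<lambda>Rs X. psubst (upp (subst_list Rs)) X"
  have body: "typing [T] (?body Rs X) Pr" if "typing (T # G) X Pr" "list_all2 (typing []) Rs G" for Rs X
    using typing_ssubst[OF t_inp[OF that(1)] that(2)] by (auto simp: ssubst_Inp elim: typing_InpE)
  have "ho_sim (hpref h (T # G) P) (hpref h (T # G) Q) \<longleftrightarrow>
      (\<forall>Rs. list_all2 (typing []) Rs G \<longrightarrow>
         ho_sim (ssubst Rs (Inp (NC h) T P)) (ssubst Rs (Inp (NC h) T Q)))"
    using Cons.IH Cons.prems by (simp add: t_inp)
  also have "\<dots> \<longleftrightarrow> (\<forall>Rs. list_all2 (typing []) Rs G \<longrightarrow>
      (\<forall>A. typing [] A T \<longrightarrow> ho_sim (ssubst (A # Rs) P) (ssubst (A # Rs) Q)))"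
    using ho_sim_Inp_iff[OF body body] Cons.prems by (simp add: ssubst_Inp ssubst_Cons)
  also have "\<dots> \<longleftrightarrow> (\<forall>Rs. list_all2 (typing []) Rs (T # G) \<longrightarrow> ho_sim (ssubst Rs P) (ssubst Rs Q))"
    by (auto simp: list_all2_Cons2)
  finally show ?case .
qed simp

theorem mainTheorem8:
  fixes P Q :: trm and G :: "ty list" and h :: nat
  assumes "typing G P Pr" and "typing G Q Pr"
    and "NC h \<notin> names P" and "NC h \<notin> names Q"
  shows "(\<forall>Rs. length Rs = length G \<and> (\<forall>i < length G. typing [] (Rs ! i) (G ! i)) \<longrightarrow>
             ho_sim (ssubst Rs P) (ssubst Rs Q))
         \<longleftrightarrow> ho_sim (hpref h G P) (hpref h G Q)"
proof -
  have "length Rs = length G \<and> (\<forall>i < length G. typing [] (Rs ! i) (G ! i)) \<longleftrightarrow>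
      list_all2 (typing []) Rs G" for Rs
    by (auto simp: list_all2_conv_all_nth)
  then show ?thesis using ho_sim_hpref_iff[OF assms(1,2)] by simp
qed

end
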